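(* The category $\mathcal M_{\max\star}(\mathbb S^{\mathrm{m},\mathbb P}_r)$ is a traced symmetric monoidal category.
   Context: Notation: $[k]=\{1,\dots,k\}$; $T(X)=X+\mathbb R\times X+\{\exists^*,\forall^*\}$; diagrammatic composition. $\mathbb S^{\mathrm{m},\mathbb P}_r$: objects natural numbers; arrows $f:m\to n$ are functions $[m]\to T([n])$ such that for all $i\ne j$, $f(i)\notin[n]$ or $f(j)\notin\{f(i)\}\cup\mathbb R\times\{f(i)\}$; each hom-set is ordered pointwise by the least order on $T([n])$ with $(r_1,i)\le(r_2,i)$ if $r_1\ge r_2$, $\exists^*\le z$, $z\le\forall^*$. Operations: $(f;g)(i)=f(i)$ if $f(i)\in\{\exists^*,\forall^*\}$; $g(j)$ if $f(i)=j$; $g(j)$ if $f(i)=(r,j)$, $g(j)\in\{\exists^*,\forall^*\}$; $(r,k)$ if $f(i)=(r,j)$, $g(j)=k$; $(r+r',k)$ if $f(i)=(r,j)$, $g(j)=(r',k)$. $\mathrm{id}(i)=i$; $\sigma_{m,n}(i)=n+i$ ($i\le m$), $\sigma_{m,n}(m+j)=j$; $(f\oplus g)(i)=f(i)$ ($i\le m$), $(f\oplus g)(m+i)$ is $g(i)$ with its index $j$ (if any) shifted to $n+j$. Trace of $f:l+m\to l+n$ at $i\in[m]$: $v_0=l+i$; if $j=0$ or $v_j\in[l]$, $v_{j+1}=f(v_j)$; if $v_j=(r,k)$ with $k\in[l]$, $v_{j+1}=f(k)$; otherwise stop. If finite $(v_0..v_K)$ with $S$ the sum of first components of $v_j\in\mathbb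 R\times[l+n]$ ($1\le j\le K$): $v_K$ if $v_K\in\{\exists^*,\forall^*\}$; $k$ if $v_K=l+k$ and $v_j\in[l]$ for $1\le j<K$; $(S,k)$ if $v_K=l+k$ and some earlier $v_j\in\mathbb R\times[l]$; $(S,k)$ if $v_K=(r,l+k)$. If infinite, with $w'_t$ the first components of the (infinitely many) entries in $\mathbb R\times[l]$: $\exists^*$ if $\liminf_N\frac1N\sum_{t\le N}w'_t\ge0$, else $\forall^*$. For a poset $X$, $\mathcal M(X)$ is the set of nonempty finite subsets of pairwise incomparable elements; for a set $S$ of elements of a poset, $S^{\circ}$ is its set of maximal elements. $\mathcal M_{\max\star}(\mathbb S^{\mathrm{m},\mathbb P}_r)$ (change of base along $\mathcal M_{\max}$) has natural numbers as objects; its arrows $m\to n$ are the elements of $\mathcal M(\mathbb S^{\mathrm{m},\mathbb P}_r(m,n))$; $S;T=\{f;g\mid f\in S,g\in T\}^{\circ}$, $S\oplus T=\{f\oplus g\mid f\in S,g\in T\}^{\circ}$, $\mathrm{tr}^l_{m,n}(S)=\{\mathrm{tr}^l_{m,n}(f)\mid f\in S\}^{\circ}$, identities $\{\mathrm{id}_m\}$, symmetries $\{\sigma_{m,n}\}$, unit object $0$. *)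

theory Defs
  imports Complex_Main "HOL-Library.Extended_Real" "HOL-Library.Liminf_Limsup"
    "HOL-Library.Infinite_Set"
begin

text \<open>Objects are natural numbers, the monoidal product on objects is addition, the
unit object is 0 (so associators and unitors are identities).  Composition is
diagrammatic: cmp f g means first f then g.  The trace traces out the first
(leftmost) l wires: tr l m n maps hom (l+m) (l+n) to hom m n.  Axioms follow
Joyal-Street-Verity (tightening, sliding, vanishing, superposing, yanking).\<close>

definition traced_smc ::
  "(nat \<Rightarrow> nat \<Rightarrow> 'a set) \<Rightarrow> ('a \<Rightarrow> 'a \<Rightarrow> 'a) \<Rightarrow> (nat \<Rightarrow> 'a) \<Rightarrow>
   (nat \<Rightarrow> nat \<Rightarrow> nat \<Rightarrow> nat \<Rightarrow> 'a \<Rightarrow> 'a \<Rightarrow> 'a) \<Rightarrow> (nat \<Rightarrow> nat \<Rightarrow> 'a) \<Rightarrow>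
   (nat \<Rightarrow> nat \<Rightarrow> nat \<Rightarrow> 'a \<Rightarrow> 'a) \<Rightarrow> bool" where
  "traced_smc hom cmp idm tens sy tr \<longleftrightarrow>
    \<comment> \<open>category\<close>
    (\<forall>m n p f g. f \<in> hom m n \<longrightarrow> g \<in> hom n p \<longrightarrow> cmp f g \<in> hom m p) \<and>
    (\<forall>m. idm m \<in> hom m m) \<and>
    (\<forall>m n f. f \<in> hom m n \<longrightarrow> cmp (idm m) f = f \<and> cmp f (idm n) = f) \<and>
    (\<forall>m n p q f g h. f \<in> hom m n \<longrightarrow> g \<in> hom n p \<longrightarrow> h \<in> hom p q \<longrightarrow>
        cmp (cmp f g) h = cmp f (cmp g h)) \<and>
    \<comment> \<open>monoidal product (strict)\<close>
    (\<forall>m n m' n' f g. f \<in> hom m n \<longrightarrow> g \<in> hom m' n' \<longrightarrow>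
        tens m n m' n' f g \<in> hom (m + m') (n + n')) \<and>
    (\<forall>m m'. tens m m m' m' (idm m) (idm m') = idm (m + m')) \<and>
    (\<forall>m n p m' n' p' f g f' g'. f \<in> hom m n \<longrightarrow> g \<in> hom n p \<longrightarrow>
        f' \<in> hom m' n' \<longrightarrow> g' \<in> hom n' p' \<longrightarrow>
        tens m p m' p' (cmp f g) (cmp f' g') =
        cmp (tens m n m' n' f f') (tens n p n' p' g g')) \<and>
    (\<forall>m n m' n' m'' n'' f g h. f \<in> hom m n \<longrightarrow> g \<in> hom m' n' \<longrightarrow> h \<in> hom m'' n'' \<longrightarrow>
        tens (m + m') (n + n') m'' n'' (tens m n m' n' f g) h =
        tens m n (m' + m'') (n' + n'') f (tens m' n' m'' n'' g h)) \<and>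
    (\<forall>m n f. f \<in> hom m n \<longrightarrow> tens 0 0 m n (idm 0) f = f \<and> tens m n 0 0 f (idm 0) = f) \<and>
    \<comment> \<open>symmetry\<close>
    (\<forall>m n. sy m n \<in> hom (m + n) (n + m)) \<and>
    (\<forall>m n m' n' f g. f \<in> hom m n \<longrightarrow> g \<in> hom m' n' \<longrightarrow>
        cmp (tens m n m' n' f g) (sy n n') = cmp (sy m m') (tens m' n' m n g f)) \<and>
    (\<forall>m n. cmp (sy m n) (sy n m) = idm (m + n)) \<and>
    (\<forall>m n p. sy m (n + p) =
        cmp (tens (m + n) (n + m) p p (sy m n) (idm p)) (tens n n (m + p) (p + m) (idm n) (sy m p))) \<and>
    \<comment> \<open>trace\<close>
    (\<forall>l m n f. f \<in> hom (l + m) (l + n) \<longrightarrow> tr l m n f \<in> hom m n) \<and>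
    \<comment> \<open>tightening (naturality in m and n)\<close>
    (\<forall>l m n m' n' f g h. f \<in> hom (l + m) (l + n) \<longrightarrow> g \<in> hom m' m \<longrightarrow> h \<in> hom n n' \<longrightarrow>
        tr l m' n' (cmp (cmp (tens l l m' m (idm l) g) f) (tens l l n n' (idm l) h)) =
        cmp (cmp g (tr l m n f)) h) \<and>
    \<comment> \<open>sliding (dinaturality in l)\<close>
    (\<forall>l l' m n f g. f \<in> hom (l + m) (l' + n) \<longrightarrow> g \<in> hom l' l \<longrightarrow>
        tr l m n (cmp f (tens l' l n n g (idm n))) = tr l' m n (cmp (tens l' l m m g (idm m)) f)) \<and>
    \<comment> \<open>vanishing\<close>
    (\<forall>m n f. f \<in> hom m n \<longrightarrow> tr 0 m n f = f) \<and>
    (\<forall>l l' m n f. f \<in> hom (l + l' + m) (l + l' + n) \<longrightarrow>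
        tr (l + l') m n f = tr l' m n (tr l (l' + m) (l' + n) f)) \<and>
    \<comment> \<open>superposing\<close>
    (\<forall>l m n m' n' f g. f \<in> hom (l + m) (l + n) \<longrightarrow> g \<in> hom m' n' \<longrightarrow>
        tr l (m + m') (n + n') (tens (l + m) (l + n) m' n' f g) = tens m n m' n' (tr l m n f) g) \<and>
    \<comment> \<open>yanking\<close>
    (\<forall>l. tr l l l (sy l l) = idm l)"

text \<open>T(X) = X + R x X + {exists*, forall*}; indices are 1-based as in the paper.\<close>
datatype tv = TIdx nat | TW real nat | TEx | TAll

text \<open>An arrow m \<rightarrow> n is represented as the list [f(1),...,f(m)].\<close>
definition in_T :: "nat \<Rightarrow> tv \<Rightarrow> bool" where
  "in_T n v = (case v of TIdx j \<Rightarrow> 1 \<le> j \<and> j \<le> n | TW r j \<Rightarrow> 1 \<le> j \<and> j \<le> n | _ \<Rightarrow> True)"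

definition Shom :: "nat \<Rightarrow> nat \<Rightarrow> tv list set" where
  "Shom m n = {f. length f = m \<and> (\<forall>i<m. in_T n (f ! i)) \<and>
     (\<forall>i<m. \<forall>j<m. i \<noteq> j \<longrightarrow>
        (case f ! i of TIdx k \<Rightarrow> f ! j \<noteq> TIdx k \<and> (\<forall>r. f ! j \<noteq> TW r k) | _ \<Rightarrow> True))}"

definition tgen :: "tv \<Rightarrow> tv \<Rightarrow> bool" where
  "tgen a b \<longleftrightarrow> (\<exists>r1 r2 i. a = TW r1 i \<and> b = TW r2 i \<and> r1 \<ge> r2) \<or> a = TEx \<or> b = TAll"

definition tle :: "tv \<Rightarrow> tv \<Rightarrow> bool" where
  "tle = tgen\<^sup>*\<^sup>*"

definition hle :: "tv list \<Rightarrow> tv list \<Rightarrow> bool" where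
  "hle f g \<longleftrightarrow> list_all2 tle f g"

definition Scomp :: "tv list \<Rightarrow> tv list \<Rightarrow> tv list" where
  "Scomp f g = map (\<lambda>v. case v of
       TEx \<Rightarrow> TEx | TAll \<Rightarrow> TAll
     | TIdx j \<Rightarrow> g ! (j - 1)
     | TW r j \<Rightarrow> (case g ! (j - 1) of TEx \<Rightarrow> TEx | TAll \<Rightarrow> TAll
                   | TIdx k \<Rightarrow> TW r k | TW r' k \<Rightarrow> TW (r + r') k)) f"

definition Sid :: "nat \<Rightarrow> tv list" where
  "Sid m = map TIdx [1..<m+1]"

definition Ssym :: "nat \<Rightarrow> nat \<Rightarrow> tv list" where
  "Ssym m n = map (\<lambda>i. TIdx (n + i)) [1..<m+1] @ map TIdx [1..<n+1]"

definition tshift :: "nat \<Rightarrow> tv \<Rightarrow> tv" where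
  "tshift n v = (case v of TIdx j \<Rightarrow> TIdx (n + j) | TW r j \<Rightarrow> TW r (n + j) | _ \<Rightarrow> v)"

definition Stens :: "nat \<Rightarrow> tv list \<Rightarrow> tv list \<Rightarrow> tv list" where
  "Stens n f g = f @ map (tshift n) g"

definition next_idx :: "nat \<Rightarrow> tv \<Rightarrow> nat option" where
  "next_idx l v = (case v of TIdx k \<Rightarrow> if 1 \<le> k \<and> k \<le> l then Some k else None
                           | TW r k \<Rightarrow> if 1 \<le> k \<and> k \<le> l then Some k else None
                           | _ \<Rightarrow> None)"

text \<open>The sequence v_0, v_1, ... (it stutters once it has stopped; only the part up to the
stopping index is used).\<close>
fun vseq :: "nat \<Rightarrow> tv list \<Rightarrow> nat \<Rightarrow> nat \<Rightarrow> tv" where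
  "vseq l f i 0 = TIdx (l + i)"
| "vseq l f i (Suc 0) = f ! (l + i - 1)"
| "vseq l f i (Suc (Suc j)) =
     (case next_idx l (vseq l f i (Suc j)) of Some k \<Rightarrow> f ! (k - 1) | None \<Rightarrow> vseq l f i (Suc j))"

definition wt :: "tv \<Rightarrow> real" where
  "wt v = (case v of TW r _ \<Rightarrow> r | _ \<Rightarrow> 0)"

definition is_idx :: "tv \<Rightarrow> bool" where
  "is_idx v = (case v of TIdx _ \<Rightarrow> True | _ \<Rightarrow> False)"

definition is_w :: "tv \<Rightarrow> bool" where
  "is_w v = (case v of TW _ _ \<Rightarrow> True | _ \<Rightarrow> False)"

definition trace_at :: "nat \<Rightarrow> tv list \<Rightarrow> nat \<Rightarrow> tv" where
  "trace_at l f i =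
    (if \<exists>K\<ge>1. next_idx l (vseq l f i K) = None then
       (let K = (LEAST K. K \<ge> 1 \<and> next_idx l (vseq l f i K) = None);
            S = (\<Sum>j\<in>{1..K}. wt (vseq l f i j))
        in case vseq l f i K of
             TEx \<Rightarrow> TEx
           | TAll \<Rightarrow> TAll
           | TIdx p \<Rightarrow> (if \<forall>j\<in>{1..<K}. is_idx (vseq l f i j) then TIdx (p - l) else TW S (p - l))
           | TW r p \<Rightarrow> TW S (p - l))
     else
       (let Ws = {j. 1 \<le> j \<and> is_w (vseq l f i j)};
            w' = (\<lambda>t. wt (vseq l f i (enumerate Ws (t - 1))))
        in if liminf (\<lambda>N. ereal ((\<Sum>t\<in>{1..N}. w' t) / real N)) \<ge> 0 then TEx else TAll))"

definition Str :: "nat \<Rightarrow> tv list \<Rightarrow> tv list" where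
  "Str l f = map (trace_at l f) [1..<length f - l + 1]"

definition antichain_h :: "tv list set \<Rightarrow> bool" where
  "antichain_h S \<longleftrightarrow> (\<forall>x\<in>S. \<forall>y\<in>S. x \<noteq> y \<longrightarrow> \<not> hle x y \<and> \<not> hle y x)"

definition Mhom :: "nat \<Rightarrow> nat \<Rightarrow> tv list set set" where
  "Mhom m n = {S. S \<subseteq> Shom m n \<and> finite S \<and> S \<noteq> {} \<and> antichain_h S}"

definition maxel :: "tv list set \<Rightarrow> tv list set" where
  "maxel S = {x \<in> S. \<not> (\<exists>y\<in>S. hle x y \<and> x \<noteq> y)}"

definition Mcomp :: "tv list set \<Rightarrow> tv list set \<Rightarrow> tv list set" where
  "Mcomp S T = maxel {Scomp f g | f g. f \<in> S \<and> g \<in> T}"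

definition Mid :: "nat \<Rightarrow> tv list set" where
  "Mid m = {Sid m}"

definition Msym :: "nat \<Rightarrow> nat \<Rightarrow> tv list set" where
  "Msym m n = {Ssym m n}"

definition Mtens :: "nat \<Rightarrow> nat \<Rightarrow> nat \<Rightarrow> nat \<Rightarrow> tv list set \<Rightarrow> tv list set \<Rightarrow> tv list set" where
  "Mtens m n m' n' S T = maxel {Stens n f g | f g. f \<in> S \<and> g \<in> T}"

definition Mtr :: "nat \<Rightarrow> nat \<Rightarrow> nat \<Rightarrow> tv list set \<Rightarrow> tv list set" where
  "Mtr l m n S = maxel (Str l ` S)"

end

theory Submission
  imports Defs
begin

text \<open>The trace of f : l + m \<rightarrow> l + n is computed wire by wire, by following the walk of an input
  through the fed-back wires. A walk that never exits is eventually periodic; as an index entry is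
  the only entry pointing to its target, a periodic part reached from an input wire carries a
  weight, and then the liminf of the mean weights in the definition of the trace is nonnegative
  exactly when the partial sums of the weights are bounded below. In this form, tracing out the
  fed-back wires one at a time yields the trace over all of them, which gives vanishing and reduces
  closure and monotonicity of the trace to the explicit single-wire case. Tightening, superposing
  and yanking are correspondences between walks, and sliding reduces by vanishing to renaming the
  fed-back wires. Finally, all operations on arrows are monotone for the pointwise order, so taking
  maximal elements commutes with them and the axioms pass to antichains of arrows.\<close>

section \<open>The order on arrows\<close>

lemma tle_iff: "tle a b \<longleftrightarrow> a = b \<or> a = TEx \<or> b = TAll \<or> (\<exists>r1 r2 i. a = TW r1 i \<and> b = TW r2 i \<and> r2 \<le> r1)"
proof
  assume "tle a b"
  then show "a = b \<or> a = TEx \<or> b = TAll \<or> (\<exists>r1 r2 i. a = TW r1 i \<and> b = TW r2 i \<and> r2 \<le> r1)"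
    unfolding tle_def
  proof (induction rule: rtranclp_induct)
    case base then show ?case by simp
  next
    case (step y z)
    from step.hyps(2) step.IH show ?case unfolding tgen_def by auto
  qed
next
  assume "a = b \<or> a = TEx \<or> b = TAll \<or> (\<exists>r1 r2 i. a = TW r1 i \<and> b = TW r2 i \<and> r2 \<le> r1)"
  then show "tle a b" unfolding tle_def
    by (metis (mono_tags) rtranclp.rtrancl_refl r_into_rtranclp tgen_def)
qed

lemma tle_refl[simp]: "tle a a" by (simp add: tle_iff)
lemma tle_trans: "tle a b \<Longrightarrow> tle b c \<Longrightarrow> tle a c"
  unfolding tle_def by (rule rtranclp_trans)
lemma tle_antisym: "tle a b \<Longrightarrow> tle b a \<Longrightarrow> a = b"
  unfolding tle_iff by auto
lemma tle_Ex[simp]: "tle TEx b" by (simp add: tle_iff)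
lemma tle_All[simp]: "tle a TAll" by (simp add: tle_iff)

lemma hle_refl[simp]: "hle f f" unfolding hle_def by (simp add: list_all2_refl)
lemma hle_trans: "hle f g \<Longrightarrow> hle g h \<Longrightarrow> hle f h"
  unfolding hle_def using list_all2_trans tle_trans by blast
lemma hle_antisym: "hle f g \<Longrightarrow> hle g f \<Longrightarrow> f = g"
  unfolding hle_def list_all2_conv_all_nth
  by (metis nth_equalityI tle_antisym)
lemma hle_iff: "hle f g \<longleftrightarrow> length f = length g \<and> (\<forall>i<length f. tle (f!i) (g!i))"
  unfolding hle_def list_all2_conv_all_nth by simp

section \<open>Maximal elements\<close>

lemma maxel_sub: "maxel S \<subseteq> S" unfolding maxel_def by auto

lemma ex_maxel_above:
  assumes fin: "finite S" and x: "x \<in> S"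
  shows "\<exists>y\<in>maxel S. hle x y"
proof -
  define R where "R = {(z, y). y \<in> S \<and> z \<in> S \<and> hle y z \<and> y \<noteq> z}"
  have "R \<subseteq> S \<times> S" unfolding R_def by auto
  then have "finite R" using fin finite_subset by blast
  moreover have "trans R" unfolding R_def trans_def using hle_trans hle_antisym by blast
  moreover have "irrefl R" unfolding R_def irrefl_def by auto
  ultimately have "wf R" by (simp add: wf_iff_acyclic_if_finite acyclic_irrefl trancl_id)
  moreover have "x \<in> {y \<in> S. hle x y}" using x by simp
  ultimately obtain y where y: "y \<in> {y \<in> S. hle x y}" and min: "\<And>z. (z, y) \<in> R \<Longrightarrow> z \<notin> {y \<in> S. hle x y}"
    by (rule wfE_min) blast
  have "y \<in> maxel S" unfolding maxel_def using y min hle_trans unfolding R_def by blast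
  then show ?thesis using y by blast
qed

lemma maxel_nonempty: "finite S \<Longrightarrow> S \<noteq> {} \<Longrightarrow> maxel S \<noteq> {}"
  using ex_maxel_above by blast

lemma maxel_antichain: "antichain_h (maxel S)"
  unfolding antichain_h_def maxel_def by auto

lemma maxel_antichain_id: "antichain_h S \<Longrightarrow> maxel S = S"
  unfolding antichain_h_def maxel_def by auto

lemma maxel_finite: "finite S \<Longrightarrow> finite (maxel S)"
  using maxel_sub finite_subset by blast

lemma maxel_eq_if_cofinal:
  assumes fin: "finite B" and sub: "A \<subseteq> B" and cofinal: "\<forall>b\<in>B. \<exists>a\<in>A. hle b a"
  shows "maxel A = maxel B"
proof
  show "maxel A \<subseteq> maxel B"
  proof
    fix x assume x: "x \<in> maxel A"
    have "\<not> (hle x y \<and> x \<noteq> y)" if y: "y \<in> B" for y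
    proof
      assume xy: "hle x y \<and> x \<noteq> y"
      obtain a where a: "a \<in> A" "hle y a" using cofinal y by blast
      then have "hle x a" "x \<noteq> a" using xy hle_trans hle_antisym by blast+
      then show False using x a unfolding maxel_def by blast
    qed
    then show "x \<in> maxel B" using x sub maxel_sub unfolding maxel_def by blast
  qed
next
  show "maxel B \<subseteq> maxel A"
  proof
    fix x assume x: "x \<in> maxel B"
    obtain a where a: "a \<in> A" "hle x a" using cofinal x maxel_sub by blast
    then have "x = a" using x sub unfolding maxel_def by blast
    then show "x \<in> maxel A" using x a sub unfolding maxel_def by blast
  qed
qed

lemma maxel_image_maxel:
  assumes fin: "finite A" and mono: "\<And>a b. a \<in> A \<Longrightarrow> b \<in> A \<Longrightarrow> hle a b \<Longrightarrow> hle (\<phi> a) (\<phi> b)"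
  shows "maxel (\<phi> ` maxel A) = maxel (\<phi> ` A)"
proof (rule maxel_eq_if_cofinal)
  show "\<forall>b\<in>\<phi> ` A. \<exists>c\<in>\<phi> ` maxel A. hle b c"
  proof
    fix b assume "b \<in> \<phi> ` A"
    then obtain a where a: "a \<in> A" "b = \<phi> a" by blast
    then obtain a' where a': "a' \<in> maxel A" "hle a a'" using ex_maxel_above[OF fin] by blast
    then have "hle b (\<phi> a')" using a mono maxel_sub by blast
    then show "\<exists>c\<in>\<phi> ` maxel A. hle b c" using a' by blast
  qed
qed (use fin maxel_sub in auto)

lemma Setcompr2_eq_image: "{\<phi> a b | a b. a \<in> A \<and> b \<in> B} = (\<lambda>(a,b). \<phi> a b) ` (A \<times> B)"
  by auto

lemma finite_Setcompr2: "finite A \<Longrightarrow> finite B \<Longrightarrow> finite {\<phi> a b | a b. a \<in> A \<and> b \<in> B}"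
  by (simp add: Setcompr2_eq_image)

lemma maxel_Setcompr2_left:
  assumes fA: "finite A" and fB: "finite B"
    and mono: "\<And>a a' b. a \<in> A \<Longrightarrow> a' \<in> A \<Longrightarrow> b \<in> B \<Longrightarrow> hle a a' \<Longrightarrow> hle (\<phi> a b) (\<phi> a' b)"
  shows "maxel {\<phi> a b | a b. a \<in> maxel A \<and> b \<in> B} = maxel {\<phi> a b | a b. a \<in> A \<and> b \<in> B}"
proof (rule maxel_eq_if_cofinal)
  show "\<forall>z\<in>{\<phi> a b | a b. a \<in> A \<and> b \<in> B}. \<exists>w\<in>{\<phi> a b | a b. a \<in> maxel A \<and> b \<in> B}. hle z w"
  proof
    fix z assume "z \<in> {\<phi> a b | a b. a \<in> A \<and> b \<in> B}"
    then obtain a b where ab: "a \<in> A" "b \<in> B" "z = \<phi> a b" by blast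
    then obtain a' where a': "a' \<in> maxel A" "hle a a'" using ex_maxel_above[OF fA] by blast
    then have "hle z (\<phi> a' b)" using ab mono maxel_sub by blast
    then show "\<exists>w\<in>{\<phi> a b | a b. a \<in> maxel A \<and> b \<in> B}. hle z w" using a' ab by blast
  qed
qed (use fA fB maxel_sub finite_Setcompr2 in auto)

lemma maxel_Setcompr2_right:
  assumes fA: "finite A" and fB: "finite B"
    and mono: "\<And>a b b'. a \<in> A \<Longrightarrow> b \<in> B \<Longrightarrow> b' \<in> B \<Longrightarrow> hle b b' \<Longrightarrow> hle (\<phi> a b) (\<phi> a b')"
  shows "maxel {\<phi> a b | a b. a \<in> A \<and> b \<in> maxel B} = maxel {\<phi> a b | a b. a \<in> A \<and> b \<in> B}"
proof (rule maxel_eq_if_cofinal)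
  show "\<forall>z\<in>{\<phi> a b | a b. a \<in> A \<and> b \<in> B}. \<exists>w\<in>{\<phi> a b | a b. a \<in> A \<and> b \<in> maxel B}. hle z w"
  proof
    fix z assume "z \<in> {\<phi> a b | a b. a \<in> A \<and> b \<in> B}"
    then obtain a b where ab: "a \<in> A" "b \<in> B" "z = \<phi> a b" by blast
    then obtain b' where b': "b' \<in> maxel B" "hle b b'" using ex_maxel_above[OF fB] by blast
    then have "hle z (\<phi> a b')" using ab mono maxel_sub by blast
    then show "\<exists>w\<in>{\<phi> a b | a b. a \<in> A \<and> b \<in> maxel B}. hle z w" using b' ab by blast
  qed
qed (use fA fB maxel_sub finite_Setcompr2 in auto)


definition add_wt :: "real \<Rightarrow> tv \<Rightarrow> tv" where
  "add_wt r x = (case x of TEx \<Rightarrow> TEx | TAll \<Rightarrow> TAll | TIdx k \<Rightarrow> TW r k | TW r' k \<Rightarrow> TW (r + r') k)"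

definition comp_entry :: "tv \<Rightarrow> tv list \<Rightarrow> tv" where
  "comp_entry v g = (case v of TEx \<Rightarrow> TEx | TAll \<Rightarrow> TAll | TIdx j \<Rightarrow> g ! (j - 1) | TW r j \<Rightarrow> add_wt r (g ! (j - 1)))"

definition target :: "tv \<Rightarrow> nat option" where
  "target v = (case v of TIdx k \<Rightarrow> Some k | TW r k \<Rightarrow> Some k | _ \<Rightarrow> None)"

lemma add_wt_simps[simp]: "add_wt r TEx = TEx" "add_wt r TAll = TAll" "add_wt r (TIdx k) = TW r k"
  "add_wt r (TW s k) = TW (r + s) k"
  by (simp_all add: add_wt_def)

lemma comp_entry_simps[simp]: "comp_entry TEx g = TEx" "comp_entry TAll g = TAll" "comp_entry (TIdx j) g = g ! (j - 1)"
  "comp_entry (TW r j) g = add_wt r (g ! (j - 1))"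
  by (simp_all add: comp_entry_def)

lemma target_simps[simp]: "target TEx = None" "target TAll = None" "target (TIdx k) = Some k" "target (TW r k) = Some k"
  by (simp_all add: target_def)

lemma add_wt_add_wt[simp]: "add_wt r (add_wt s x) = add_wt (r + s) x"
  by (cases x) (simp_all add: add.assoc)

lemma target_add_wt[simp]: "target (add_wt r x) = target x" by (cases x) simp_all

lemma in_T_target: "in_T n v \<longleftrightarrow> (\<forall>k. target v = Some k \<longrightarrow> 1 \<le> k \<and> k \<le> n)"
  by (cases v) (simp_all add: in_T_def)

lemma in_T_simps[simp]: "in_T n (TIdx k) \<longleftrightarrow> 1 \<le> k \<and> k \<le> n" "in_T n (TW r k) \<longleftrightarrow> 1 \<le> k \<and> k \<le> n"
  "in_T n TEx" "in_T n TAll"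
  by (simp_all add: in_T_def)

lemma in_T_add_wt[simp]: "in_T n (add_wt r x) = in_T n x" by (simp add: in_T_target)

lemma Shom_iff: "f \<in> Shom m n \<longleftrightarrow> length f = m \<and> (\<forall>i<m. in_T n (f ! i)) \<and>
   (\<forall>i<m. \<forall>j<m. \<forall>k. i \<noteq> j \<longrightarrow> f ! i = TIdx k \<longrightarrow> target (f ! j) \<noteq> Some k)"
proof -
  have "(case f ! i of TIdx k \<Rightarrow> f ! j \<noteq> TIdx k \<and> (\<forall>r. f ! j \<noteq> TW r k) | _ \<Rightarrow> True)
     \<longleftrightarrow> (\<forall>k. f ! i = TIdx k \<longrightarrow> target (f ! j) \<noteq> Some k)" for i j
    by (cases "f!i"; cases "f!j") auto
  then show ?thesis unfolding Shom_def by auto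
qed

lemma ShomD:
  assumes "f \<in> Shom m n"
  shows "length f = m" "\<And>i. i < m \<Longrightarrow> in_T n (f ! i)"
    "\<And>i j k. i < m \<Longrightarrow> j < m \<Longrightarrow> i \<noteq> j \<Longrightarrow> f ! i = TIdx k \<Longrightarrow> target (f ! j) \<noteq> Some k"
  using assms unfolding Shom_iff by blast+

lemma Scomp_length[simp]: "length (Scomp f g) = length f" by (simp add: Scomp_def)

lemma Scomp_nth[simp]: "i < length f \<Longrightarrow> Scomp f g ! i = comp_entry (f ! i) g"
  unfolding Scomp_def by (cases "f ! i") (simp_all add: add_wt_def)

lemma add_wt_not_TIdx[simp]: "add_wt r x \<noteq> TIdx k" by (cases x) simp_all

lemma comp_entry_TIdx_D: "comp_entry v g = TIdx k \<Longrightarrow> \<exists>a. v = TIdx a \<and> g ! (a - 1) = TIdx k"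
  by (cases v) auto

lemma target_comp_entry_D: "target (comp_entry v g) = Some k \<Longrightarrow> \<exists>b. target v = Some b \<and> target (g ! (b - 1)) = Some k"
  by (cases v) auto

lemma in_T_comp_entry: assumes "in_T n v" "g \<in> Shom n p" shows "in_T p (comp_entry v g)"
proof (cases v)
  case (TIdx x1) then show ?thesis using assms ShomD(2)[OF assms(2), of "x1 - 1"] by auto
next
  case (TW x21 x22) then show ?thesis using assms ShomD(2)[OF assms(2), of "x22 - 1"] by auto
qed simp_all

lemma Scomp_Shom: assumes f: "f \<in> Shom m n" and g: "g \<in> Shom n p"
  shows "Scomp f g \<in> Shom m p"
  unfolding Shom_iff
proof (intro conjI allI impI)
  show "length (Scomp f g) = m" using ShomD[OF f] by simp
next
  fix i assume "i < m" then show "in_T p (Scomp f g ! i)"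
    using ShomD(1)[OF f] in_T_comp_entry[OF ShomD(2)[OF f] g] by simp
next
  fix i j k assume ij: "i < m" "j < m" "i \<noteq> j" and e: "Scomp f g ! i = TIdx k"
  have lf: "length f = m" using ShomD[OF f] by simp
  from e ij lf obtain a where a: "f ! i = TIdx a" "g ! (a - 1) = TIdx k" using comp_entry_TIdx_D by force
  have ina: "1 \<le> a" "a \<le> n" using ShomD(2)[OF f ij(1)] a by auto
  show "target (Scomp f g ! j) \<noteq> Some k"
  proof
    assume "target (Scomp f g ! j) = Some k"
    then obtain b where b: "target (f ! j) = Some b" "target (g ! (b - 1)) = Some k" using target_comp_entry_D ij lf by force
    have inb: "1 \<le> b" "b \<le> n" using ShomD(2)[OF f ij(2)] b by (auto simp: in_T_target)
    show False
    proof (cases "a = b")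
      case True then show ?thesis using ShomD(3)[OF f ij a(1)] b by simp
    next
      case False
      then have "a - 1 \<noteq> b - 1" "a - 1 < n" "b - 1 < n" using ina inb by auto
      then show ?thesis using ShomD(3)[OF g _ _ _ a(2)] b by blast
    qed
  qed
qed

lemma comp_entry_add_wt: "comp_entry (add_wt r x) h = add_wt r (comp_entry x h)"
  by (cases x) simp_all

lemma comp_entry_assoc: "in_T n v \<Longrightarrow> length g = n \<Longrightarrow> comp_entry (comp_entry v g) h = comp_entry v (Scomp g h)"
  by (cases v) (auto simp: comp_entry_add_wt)

lemma Scomp_assoc: assumes f: "f \<in> Shom m n" and g: "g \<in> Shom n p"
  shows "Scomp (Scomp f g) h = Scomp f (Scomp g h)"
  apply (rule nth_equalityI)
  using ShomD(1,2)[OF f] ShomD(1)[OF g] comp_entry_assoc[of n _ g h] by auto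

lemma Sid_length[simp]: "length (Sid m) = m" by (simp add: Sid_def)
lemma Sid_nth[simp]: "i < m \<Longrightarrow> Sid m ! i = TIdx (Suc i)" by (simp add: Sid_def del: upt_Suc)

lemma Sid_Shom: "Sid m \<in> Shom m m"
  unfolding Shom_iff by auto

lemma comp_entry_Sid: "in_T n v \<Longrightarrow> comp_entry v (Sid n) = v"
  by (cases v) auto

lemma Scomp_Sid_left: "length f = m \<Longrightarrow> Scomp (Sid m) f = f"
  by (rule nth_equalityI) auto

lemma Scomp_Sid_right: assumes "f \<in> Shom m n" shows "Scomp f (Sid n) = f"
  using ShomD(1,2)[OF assms] by (intro nth_equalityI) (auto simp: comp_entry_Sid)

lemma tle_add_wt_w: "r2 \<le> r1 \<Longrightarrow> tle (add_wt r1 x) (add_wt r2 x)"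
  by (cases x) (auto simp: tle_iff)

lemma tle_add_wt: "tle x y \<Longrightarrow> tle (add_wt r x) (add_wt r y)"
  unfolding tle_iff by (cases x; cases y) auto

lemma tle_comp_entry_left: "tle v v' \<Longrightarrow> tle (comp_entry v g) (comp_entry v' g)"
  unfolding tle_iff[of v v'] by (auto intro: tle_add_wt_w)

lemma tle_comp_entry_right: "in_T n v \<Longrightarrow> hle g g' \<Longrightarrow> length g = n \<Longrightarrow> tle (comp_entry v g) (comp_entry v g')"
  by (cases v) (auto simp: hle_iff intro: tle_add_wt)

lemma Scomp_mono: assumes "hle f f'" "hle g g'" "f' \<in> Shom m n" "length g = n"
  shows "hle (Scomp f g) (Scomp f' g')"
  unfolding hle_iff
proof (intro conjI allI impI)
  show "length (Scomp f g) = length (Scomp f' g')" using assms(1) by (simp add: hle_iff)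
next
  fix i assume i: "i < length (Scomp f g)"
  have l: "length f = length f'" using assms(1) by (simp add: hle_iff)
  have "tle (comp_entry (f!i) g) (comp_entry (f'!i) g)" using assms(1) i by (simp add: hle_iff tle_comp_entry_left)
  moreover have "tle (comp_entry (f'!i) g) (comp_entry (f'!i) g')"
    using tle_comp_entry_right[OF _ assms(2) assms(4)] ShomD[OF assms(3)] i l by simp
  ultimately show "tle (Scomp f g ! i) (Scomp f' g' ! i)" using i l tle_trans by simp
qed

lemma tshift_simps[simp]: "tshift n TEx = TEx" "tshift n TAll = TAll" "tshift n (TIdx k) = TIdx (n + k)"
  "tshift n (TW r k) = TW r (n + k)"
  by (simp_all add: tshift_def)

lemma tshift_0[simp]: "tshift 0 v = v" by (cases v) simp_all
lemma tshift_0'[simp]: "tshift 0 = (\<lambda>v. v)" by (rule ext) simp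
lemma tshift_tshift[simp]: "tshift n (tshift n' v) = tshift (n + n') v" by (cases v) simp_all
lemma target_tshift: "target (tshift n v) = map_option ((+) n) (target v)" by (cases v) simp_all

lemma Stens_length[simp]: "length (Stens n f g) = length f + length g" by (simp add: Stens_def)
lemma Stens_nth1[simp]: "i < length f \<Longrightarrow> Stens n f g ! i = f ! i" by (simp add: Stens_def nth_append)
lemma Stens_nth2[simp]: "length f \<le> i \<Longrightarrow> i < length f + length g \<Longrightarrow> Stens n f g ! i = tshift n (g ! (i - length f))"
  by (simp add: Stens_def nth_append)

lemma Stens_Shom: assumes f: "f \<in> Shom m n" and g: "g \<in> Shom m' n'"
  shows "Stens n f g \<in> Shom (m + m') (n + n')"
  unfolding Shom_iff
proof (intro conjI allI impI)
  have lf: "length f = m" and lg: "length g = m'" using ShomD f g by auto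
  show "length (Stens n f g) = m + m'" using lf lg by simp
  fix i assume i: "i < m + m'"
  show "in_T (n + n') (Stens n f g ! i)"
  proof (cases "i < m")
    case True then show ?thesis using ShomD(2)[OF f True] lf by (auto simp: in_T_target)
  next
    case False then have "i - m < m'" using i by simp
    then have "in_T n' (g ! (i - m))" using ShomD(2)[OF g] by blast
    then show ?thesis using False lf lg i by (auto simp: in_T_target target_tshift)
  qed
next
  have lf: "length f = m" and lg: "length g = m'" using ShomD f g by auto
  fix i j k assume ij: "i < m + m'" "j < m + m'" "i \<noteq> j" and e: "Stens n f g ! i = TIdx k"
  show "target (Stens n f g ! j) \<noteq> Some k"
  proof (cases "i < m")
    case True
    then have fi: "f ! i = TIdx k" using e lf by simp
    have "k \<le> n" using ShomD(2)[OF f True] fi by (simp add: in_T_def)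
    show ?thesis
    proof (cases "j < m")
      case True then show ?thesis using ShomD(3)[OF f \<open>i<m\<close> True ij(3) fi] lf by simp
    next
      case False
      then have "Stens n f g ! j = tshift n (g ! (j - m))" using lf lg ij by simp
      moreover have "j - m < m'" using False ij by simp
      ultimately show ?thesis using ShomD(2)[OF g, of "j-m"] \<open>k \<le> n\<close> by (auto simp: target_tshift in_T_target)
    qed
  next
    case False
    then have gi: "tshift n (g ! (i - m)) = TIdx k" using e lf lg ij by simp
    then obtain k' where k': "g ! (i - m) = TIdx k'" "k = n + k'" by (cases "g ! (i-m)") auto
    have "1 \<le> k'" using ShomD(2)[OF g, of "i-m"] k' False ij by (simp add: in_T_def)
    show ?thesis
    proof (cases "j < m")
      case True then show ?thesis using ShomD(2)[OF f True] lf k' \<open>1 \<le> k'\<close> by (auto simp: in_T_target)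
    next
      case False2: False
      then have "Stens n f g ! j = tshift n (g ! (j - m))" using lf lg ij by simp
      moreover have "i - m \<noteq> j - m" "i - m < m'" "j - m < m'" using False False2 ij by auto
      ultimately show ?thesis using ShomD(3)[OF g _ _ _ k'(1)] k' by (auto simp: target_tshift)
    qed
  qed
qed

lemma Stens_Sid: "Stens m (Sid m) (Sid m') = Sid (m + m')"
proof (rule nth_equalityI)
  fix i assume "i < length (Stens m (Sid m) (Sid m'))"
  then show "Stens m (Sid m) (Sid m') ! i = Sid (m + m') ! i"
    by (cases "i < m") auto
qed simp

lemma comp_entry_left: "in_T n v \<Longrightarrow> length g = n \<Longrightarrow> comp_entry v (Stens p g g') = comp_entry v g"
  by (cases v) auto

lemma tshift_add_wt: "tshift p (add_wt r x) = add_wt r (tshift p x)" by (cases x) simp_all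

lemma comp_entry_right: "in_T n' v \<Longrightarrow> length g = n \<Longrightarrow> length g' = n' \<Longrightarrow>
   comp_entry (tshift n v) (Stens p g g') = tshift p (comp_entry v g')"
  by (cases v) (auto simp: tshift_add_wt)

lemma Stens_interchange:
  assumes f: "f \<in> Shom m n" and g: "g \<in> Shom n p" and f': "f' \<in> Shom m' n'" and g': "g' \<in> Shom n' p'"
  shows "Stens p (Scomp f g) (Scomp f' g') = Scomp (Stens n f f') (Stens p g g')"
proof (rule nth_equalityI)
  note F = ShomD[OF f] and G = ShomD[OF g] and F' = ShomD[OF f'] and G' = ShomD[OF g']
  show "length (Stens p (Scomp f g) (Scomp f' g')) = length (Scomp (Stens n f f') (Stens p g g'))" by simp
  fix i assume "i < length (Stens p (Scomp f g) (Scomp f' g'))"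
  then have i: "i < m + m'" using F F' by simp
  show "Stens p (Scomp f g) (Scomp f' g') ! i = Scomp (Stens n f f') (Stens p g g') ! i"
  proof (cases "i < m")
    case True then show ?thesis using F(1,2) G(1) comp_entry_left[of n "f!i" g p g'] by simp
  next
    case False then have "i - m < m'" using i by simp
    then show ?thesis using False F(1) G(1) F'(1,2) G'(1) i comp_entry_right[of n' "f'!(i-m)" g n g' p] by simp
  qed
qed

lemma Stens_assoc: "Stens (n + n') (Stens n f g) h = Stens n f (Stens n' g h)"
  by (simp add: Stens_def add.commute)

lemma Stens_unit: "Stens 0 [] f = f" "Stens n f [] = f"
  by (simp_all add: Stens_def)

lemma tle_tshift: "tle x y \<Longrightarrow> tle (tshift n x) (tshift n y)"
  unfolding tle_iff by (cases x; cases y) auto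

lemma Stens_mono: "hle f f' \<Longrightarrow> hle g g' \<Longrightarrow> hle (Stens n f g) (Stens n f' g')"
  unfolding hle_def Stens_def
  by (simp add: list_all2_appendI list_all2_map1 list_all2_map2 list_all2_mono tle_tshift)

lemma Ssym_length[simp]: "length (Ssym m n) = m + n" by (simp add: Ssym_def)
lemma Ssym_nth: "i < m + n \<Longrightarrow> Ssym m n ! i = (if i < m then TIdx (n + Suc i) else TIdx (Suc (i - m)))"
  by (auto simp: Ssym_def nth_append)

lemma Ssym_Shom: "Ssym m n \<in> Shom (m + n) (n + m)"
  unfolding Shom_iff by (auto simp: Ssym_nth)

lemma comp_entry_Ssym1: "in_T n v \<Longrightarrow> comp_entry v (Ssym n n') = tshift n' v"
  by (cases v) (auto simp: Ssym_nth)

lemma comp_entry_Ssym2: "in_T n' v \<Longrightarrow> comp_entry (tshift n v) (Ssym n n') = v"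
  by (cases v) (auto simp: Ssym_nth)

lemma Ssym_natural:
  assumes f: "f \<in> Shom m n" and g: "g \<in> Shom m' n'"
  shows "Scomp (Stens n f g) (Ssym n n') = Scomp (Ssym m m') (Stens n' g f)"
proof (rule nth_equalityI)
  note F = ShomD[OF f] and G = ShomD[OF g]
  show "length (Scomp (Stens n f g) (Ssym n n')) = length (Scomp (Ssym m m') (Stens n' g f))"
    using F G by simp
  fix i assume "i < length (Scomp (Stens n f g) (Ssym n n'))"
  then have i: "i < m + m'" using F G by simp
  show "Scomp (Stens n f g) (Ssym n n') ! i = Scomp (Ssym m m') (Stens n' g f) ! i"
  proof (cases "i < m")
    case True then show ?thesis using F G i by (simp add: Ssym_nth comp_entry_Ssym1)
  next
    case False then show ?thesis using F G i by (simp add: Ssym_nth comp_entry_Ssym2)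
  qed
qed

lemma Ssym_inverse: "Scomp (Ssym m n) (Ssym n m) = Sid (m + n)"
  by (rule nth_equalityI) (auto simp: Ssym_nth)

lemma Ssym_hexagon: "Ssym m (n + p) = Scomp (Stens (n + m) (Ssym m n) (Sid p)) (Stens n (Sid n) (Ssym m p))"
proof (rule nth_equalityI)
  show "length (Ssym m (n + p)) = length (Scomp (Stens (n + m) (Ssym m n) (Sid p)) (Stens n (Sid n) (Ssym m p)))"
    by simp
  fix i assume "i < length (Ssym m (n + p))"
  then have i: "i < m + (n + p)" by simp
  consider "i < m" | "m \<le> i" "i < m + n" | "m + n \<le> i" by linarith
  then show "Ssym m (n + p) ! i = Scomp (Stens (n + m) (Ssym m n) (Sid p)) (Stens n (Sid n) (Ssym m p)) ! i"
  proof cases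
    case 1
    have A: "Stens (n + m) (Ssym m n) (Sid p) ! i = TIdx (n + Suc i)" using 1 by (simp add: Ssym_nth)
    have B: "Stens n (Sid n) (Ssym m p) ! (n + i) = TIdx (n + (p + Suc i))" using 1 by (simp add: Ssym_nth)
    show ?thesis using 1 i A B by (simp add: Ssym_nth)
  next
    case 2
    have A: "Stens (n + m) (Ssym m n) (Sid p) ! i = TIdx (Suc (i - m))" using 2 by (simp add: Ssym_nth)
    have B: "Stens n (Sid n) (Ssym m p) ! (i - m) = TIdx (Suc (i - m))" using 2 by simp
    show ?thesis using 2 i A B by (simp add: Ssym_nth)
  next
    case 3
    have A: "Stens (n + m) (Ssym m n) (Sid p) ! i = TIdx (Suc i)" using 3 i by simp
    have B: "Stens n (Sid n) (Ssym m p) ! i = TIdx (n + Suc (i - n - m))" using 3 i by (simp add: Ssym_nth)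
    show ?thesis using 3 i A B by (simp add: Ssym_nth)
  qed
qed


section \<open>Walks through the fed-back wires\<close>

fun walk :: "nat \<Rightarrow> tv list \<Rightarrow> tv \<Rightarrow> nat \<Rightarrow> tv" where
  "walk l f v 0 = v"
| "walk l f v (Suc j) = (case next_idx l (walk l f v j) of Some k \<Rightarrow> f ! (k - 1) | None \<Rightarrow> walk l f v j)"

definition unshift :: "nat \<Rightarrow> tv \<Rightarrow> tv" where
  "unshift l v = (case v of TIdx p \<Rightarrow> TIdx (p - l) | TW r p \<Rightarrow> TW r (p - l) | x \<Rightarrow> x)"

definition carry :: "tv \<Rightarrow> tv \<Rightarrow> tv" where
  "carry v x = (case v of TW r _ \<Rightarrow> add_wt r x | _ \<Rightarrow> x)"

fun walk_value_upto :: "nat \<Rightarrow> tv list \<Rightarrow> tv \<Rightarrow> nat \<Rightarrow> tv" where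
  "walk_value_upto l f v 0 = unshift l v"
| "walk_value_upto l f v (Suc K) = (case next_idx l v of None \<Rightarrow> unshift l v | Some k \<Rightarrow> carry v (walk_value_upto l f (f ! (k - 1)) K))"

definition exits :: "nat \<Rightarrow> tv list \<Rightarrow> tv \<Rightarrow> bool" where
  "exits l f v \<longleftrightarrow> (\<exists>j. next_idx l (walk l f v j) = None)"

definition walk_sum :: "nat \<Rightarrow> tv list \<Rightarrow> tv \<Rightarrow> nat \<Rightarrow> real" where
  "walk_sum l f v N = (\<Sum>j<N. wt (walk l f v j))"

lemma bdd_below_range_iff: "bdd_below (range s) \<longleftrightarrow> (\<exists>B. \<forall>N. B \<le> s N)"
  by (auto simp: bdd_below_def)

definition verdict :: "bool \<Rightarrow> tv" where
  "verdict b = (if b then TEx else TAll)"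

text \<open>For a walk that never exits, the liminf
  criterion of the trace is replaced by boundedness of the partial weight sums; the two agree by
  liminf_mean_weight_iff below.\<close>

definition walk_value :: "nat \<Rightarrow> tv list \<Rightarrow> tv \<Rightarrow> tv" where
  "walk_value l f v = (if exits l f v then walk_value_upto l f v (LEAST j. next_idx l (walk l f v j) = None)
                 else verdict (bdd_below (range (walk_sum l f v))))"

lemma next_idx_Some: "next_idx l v = Some k \<longleftrightarrow> target v = Some k \<and> 1 \<le> k \<and> k \<le> l"
  by (cases v) (auto simp: next_idx_def)

lemma next_idx_simps[simp]: "next_idx l TEx = None" "next_idx l TAll = None"
  "next_idx l (TIdx k) = (if 1 \<le> k \<and> k \<le> l then Some k else None)"
  "next_idx l (TW r k) = (if 1 \<le> k \<and> k \<le> l then Some k else None)"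
  by (simp_all add: next_idx_def)

lemma wt_simps[simp]: "wt TEx = 0" "wt TAll = 0" "wt (TIdx k) = 0" "wt (TW r k) = r"
  by (simp_all add: wt_def)

lemma is_idx_simps[simp]: "is_idx TEx = False" "is_idx TAll = False" "is_idx (TIdx k) = True" "is_idx (TW r k) = False"
  by (simp_all add: is_idx_def)

lemma is_w_simps[simp]: "is_w TEx = False" "is_w TAll = False" "is_w (TIdx k) = False" "is_w (TW r k) = True"
  by (simp_all add: is_w_def)

lemma unshift_simps[simp]: "unshift l TEx = TEx" "unshift l TAll = TAll" "unshift l (TIdx p) = TIdx (p - l)" "unshift l (TW r p) = TW r (p - l)"
  by (simp_all add: unshift_def)

lemma carry_simps[simp]: "carry (TW r k) x = add_wt r x" "carry (TIdx k) x = x" "carry TEx x = x" "carry TAll x = x"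
  by (simp_all add: carry_def)

lemma carry_verdict[simp]: "carry v (verdict b) = verdict b"
  by (cases v) (simp_all add: verdict_def)

lemma add_wt_verdict[simp]: "add_wt r (verdict b) = verdict b"
  by (simp add: verdict_def)

lemma walk_Suc_first: "walk l f v (Suc j) = (case next_idx l v of None \<Rightarrow> v | Some k \<Rightarrow> walk l f (f ! (k - 1)) j)"
proof (induction j)
  case 0 then show ?case by (simp split: option.splits)
next
  case (Suc j)
  show ?case
  proof (cases "next_idx l v")
    case None
    then have "walk l f v (Suc j) = v" using Suc by simp
    then show ?thesis using None by simp
  next
    case (Some k)
    then have "walk l f v (Suc j) = walk l f (f ! (k - 1)) j" using Suc by simp
    then show ?thesis using Some by (simp only: walk.simps) simp
  qed
qed

lemma walk_step: "walk l f v (Suc j) = (case next_idx l (walk l f v j) of Some k \<Rightarrow> f ! (k - 1) | None \<Rightarrow> walk l f v j)"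
  by simp

declare walk.simps(2)[simp del]

lemma walk_Suc_Some: "next_idx l v = Some k \<Longrightarrow> walk l f v (Suc j) = walk l f (f ! (k - 1)) j"
  by (simp add: walk_Suc_first)

lemma walk_selfloop: "next_idx l u = Some k \<Longrightarrow> f ! (k - 1) = u \<Longrightarrow> walk l f u j = u"
  by (induction j) (simp_all add: walk_step)

lemma walk_det: "walk l f v j = walk l f v j' \<Longrightarrow> walk l f v (j + t) = walk l f v (j' + t)"
  by (induction t) (simp_all only: add_Suc_right add_0_right walk_step)

lemma walk_value_upto_stable:
  "next_idx l (walk l f v E) = None \<Longrightarrow> E \<le> K \<Longrightarrow> walk_value_upto l f v K = walk_value_upto l f v E"
proof (induction E arbitrary: v K)
  case 0
  then have "next_idx l v = None" by simp
  then show ?case by (cases K) simp_all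
next
  case (Suc E)
  show ?case
  proof (cases "next_idx l v")
    case None
    then show ?thesis using Suc.prems by (cases K) simp_all
  next
    case (Some k)
    obtain K' where K: "K = Suc K'" using Suc.prems by (cases K) auto
    have "next_idx l (walk l f (f ! (k - 1)) E) = None" using Suc.prems(1) Some by (simp add: walk_Suc_Some)
    moreover have "E \<le> K'" using Suc.prems K by simp
    ultimately have "walk_value_upto l f (f ! (k - 1)) K' = walk_value_upto l f (f ! (k - 1)) E" by (rule Suc.IH)
    then show ?thesis using K Some by simp
  qed
qed

lemma walk_value_exits:
  assumes "next_idx l (walk l f v K) = None"
  shows "walk_value l f v = walk_value_upto l f v K"
proof -
  let ?E = "LEAST j. next_idx l (walk l f v j) = None"
  have "exits l f v" using assms exits_def by blast
  moreover have "next_idx l (walk l f v ?E) = None" using assms by (rule LeastI)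
  moreover have "?E \<le> K" using assms by (rule Least_le)
  ultimately show ?thesis unfolding walk_value_def using walk_value_upto_stable[of l f v ?E K] by simp
qed

lemma exits_step: "next_idx l v = Some k \<Longrightarrow> exits l f v \<longleftrightarrow> exits l f (f ! (k - 1))"
  unfolding exits_def
proof
  assume S: "next_idx l v = Some k" and "\<exists>j. next_idx l (walk l f v j) = None"
  then obtain j where j: "next_idx l (walk l f v j) = None" by blast
  then have "j \<noteq> 0" using S by (cases j) auto
  then obtain j' where "j = Suc j'" by (cases j) auto
  then show "\<exists>j. next_idx l (walk l f (f ! (k - 1)) j) = None" using j S by (auto simp: walk_Suc_Some)
next
  assume S: "next_idx l v = Some k" and "\<exists>j. next_idx l (walk l f (f ! (k - 1)) j) = None"
  then obtain j where j: "next_idx l (walk l f (f ! (k - 1)) j) = None" by blast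
  then show "\<exists>j. next_idx l (walk l f v j) = None" using S by (metis walk_Suc_Some)
qed

lemma walk_sum_Suc_Some: "next_idx l v = Some k \<Longrightarrow> walk_sum l f v (Suc N) = wt v + walk_sum l f (f ! (k - 1)) N"
  unfolding walk_sum_def sum.lessThan_Suc_shift by (simp add: walk_Suc_Some del: sum.lessThan_Suc)

lemma bdd_below_range_shift:
  fixes s s' :: "nat \<Rightarrow> real"
  assumes shift: "\<And>N. s (Suc N) = c + s' N"
  shows "bdd_below (range s) \<longleftrightarrow> bdd_below (range s')"
proof
  assume "bdd_below (range s)"
  then obtain B where "\<forall>N. B \<le> s N" unfolding bdd_below_range_iff by blast
  then have "\<forall>N. B - c \<le> s' N" using shift by (metis diff_le_eq add.commute)
  then show "bdd_below (range s')" unfolding bdd_below_range_iff by blast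
next
  assume "bdd_below (range s')"
  then obtain B where B: "\<forall>N. B \<le> s' N" unfolding bdd_below_range_iff by blast
  have "min (s 0) (B + c) \<le> s N" for N
    using B shift by (cases N) (auto simp: min.coboundedI1 min.coboundedI2 add.commute)
  then show "bdd_below (range s)" unfolding bdd_below_range_iff by blast
qed

lemma walk_value_step: "walk_value l f v = (case next_idx l v of None \<Rightarrow> unshift l v | Some k \<Rightarrow> carry v (walk_value l f (f ! (k - 1))))"
proof (cases "next_idx l v")
  case None
  then have "walk_value l f v = walk_value_upto l f v 0" using walk_value_exits[of l f v 0] by simp
  then show ?thesis using None by simp
next
  case (Some k)
  let ?w = "f ! (k - 1)"
  show ?thesis
  proof (cases "exits l f ?w")
    case True
    then obtain K where K: "next_idx l (walk l f ?w K) = None" unfolding exits_def by blast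
    then have "next_idx l (walk l f v (Suc K)) = None" using Some by (simp add: walk_Suc_Some)
    then have "walk_value l f v = walk_value_upto l f v (Suc K)" by (rule walk_value_exits)
    also have "\<dots> = carry v (walk_value_upto l f ?w K)" using Some by simp
    also have "\<dots> = carry v (walk_value l f ?w)" using walk_value_exits[OF K] by simp
    finally show ?thesis using Some by simp
  next
    case False
    then have nf: "\<not> exits l f v" using exits_step[OF Some] by simp
    have "bdd_below (range (walk_sum l f v)) \<longleftrightarrow> bdd_below (range (walk_sum l f ?w))"
      by (rule bdd_below_range_shift) (rule walk_sum_Suc_Some[OF Some])
    then show ?thesis using nf False Some unfolding walk_value_def by simp
  qed
qed

lemma walk_value_exit: "next_idx l v = None \<Longrightarrow> walk_value l f v = unshift l v"
  by (subst walk_value_step) simp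

lemma walk_value_Some: "next_idx l v = Some k \<Longrightarrow> walk_value l f v = carry v (walk_value l f (f ! (k - 1)))"
  by (subst walk_value_step) simp

lemma walk_value_selfloop:
  assumes S: "next_idx l u = Some k" and L: "f ! (k - 1) = u"
  shows "walk_value l f u = verdict (0 \<le> wt u)"
proof -
  have P: "walk l f u j = u" for j using walk_selfloop[OF S L] .
  have nf: "\<not> exits l f u" unfolding exits_def using P S by simp
  have sums: "walk_sum l f u N = real N * wt u" for N unfolding walk_sum_def P by simp
  have "bdd_below (range (walk_sum l f u)) \<longleftrightarrow> 0 \<le> wt u"
  proof
    assume "bdd_below (range (walk_sum l f u))"
    then obtain B where B: "\<forall>N. B \<le> real N * wt u" unfolding bdd_below_range_iff sums by blast
    show "0 \<le> wt u"
    proof (rule ccontr)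
      assume neg: "\<not> 0 \<le> wt u"
      obtain N :: nat where "N > B / wt u" using reals_Archimedean2 by blast
      then have "real N * wt u < B" using neg by (simp add: pos_divide_less_eq neg_divide_less_eq mult.commute)
      then show False using B by (meson not_le)
    qed
  next
    assume "0 \<le> wt u" then show "bdd_below (range (walk_sum l f u))" unfolding bdd_below_range_iff sums by (auto intro: exI[of _ 0])
  qed
  then show ?thesis using nf unfolding walk_value_def by simp
qed


lemma not_w_wt: "\<not> is_w v \<Longrightarrow> wt v = 0"
  by (cases v) simp_all

lemma one_N_image: "{1..N} = Suc ` {..<(N::nat)}"
  using lessThan_atLeast0 atLeastLessThanSuc_atLeastAtMost image_Suc_atLeastLessThan by force

lemma sum_Suc_shift_1N: "(\<Sum>t\<in>{1..N::nat}. g (t - 1)) = (\<Sum>t<N. (g t :: real))"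
  unfolding one_N_image by (simp add: sum.reindex)

lemma sum_Suc_shift_1M: "(\<Sum>j\<in>{1..M::nat}. g j) = (\<Sum>j<M. (g (Suc j) :: real))"
  unfolding one_N_image by (simp add: sum.reindex)

section \<open>Eventually periodic sums and mean weights\<close>

lemma eventually_periodic_shift:
  fixes y :: "nat \<Rightarrow> 'b"
  assumes per: "\<forall>t\<ge>a. y (t + P) = y t" and "a \<le> t"
  shows "y (t + q * P) = y t"
proof (induction q)
  case 0 then show ?case by simp
next
  case (Suc q)
  have "y (t + Suc q * P) = y ((t + q * P) + P)" by (simp add: algebra_simps)
  also have "\<dots> = y (t + q * P)" using per assms(2) by simp
  finally show ?case using Suc by simp
qed

lemma sum_eventually_periodic:
  fixes w :: "nat \<Rightarrow> real"
  assumes per: "\<forall>t\<ge>a. w (t + P) = w t" and M: "a \<le> M"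
  shows "(\<Sum>j<M + q * P. w j) = (\<Sum>j<M. w j) + real q * ((\<Sum>j<a + P. w j) - (\<Sum>j<a. w j))"
proof -
  define s where "s N = (\<Sum>j<N. w j)" for N
  define C where "C = s (a + P) - s a"
  have cycle: "s (M' + P) - s M' = C" if "a \<le> M'" for M'
    using that
  proof (induction M' rule: dec_induct)
    case base then show ?case by (simp add: C_def)
  next
    case (step n)
    have "s (Suc n + P) - s (Suc n) = (s (n + P) + w (n + P)) - (s n + w n)"
      by (simp add: s_def)
    also have "w (n + P) = w n" using per step.hyps(1) by simp
    finally show ?case using step.IH by simp
  qed
  have "s (M + q * P) = s M + real q * C"
  proof (induction q)
    case 0 then show ?case by simp
  next
    case (Suc q)
    have "s (M + Suc q * P) = s ((M + q * P) + P)" by (simp add: algebra_simps)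
    also have "\<dots> = s (M + q * P) + C" using cycle[of "M + q * P"] M by simp
    finally show ?case using Suc by (simp add: algebra_simps)
  qed
  then show ?thesis unfolding s_def C_def by simp
qed

lemma sum_eventually_periodic_decomp:
  fixes w :: "nat \<Rightarrow> real"
  assumes per: "\<forall>t\<ge>a. w (t + P) = w t" and P: "0 < P" and M: "a \<le> M"
  obtains r q where "r < P" "real q * real P > real M - real a - real P"
    "(\<Sum>j<M. w j) = (\<Sum>j<a + r. w j) + real q * ((\<Sum>j<a + P. w j) - (\<Sum>j<a. w j))"
proof -
  define r where "r = (M - a) mod P"
  define q where "q = (M - a) div P"
  have Mq: "M = (a + r) + q * P" using M unfolding r_def q_def by simp
  have rP: "r < P" using P unfolding r_def by simp
  have "real (M - a) = real r + real q * real P" using Mq by simp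
  then have "real q * real P > real M - real a - real P" using rP M by (simp add: of_nat_diff)
  moreover have "(\<Sum>j<M. w j) = (\<Sum>j<a + r. w j) + real q * ((\<Sum>j<a + P. w j) - (\<Sum>j<a. w j))"
    using sum_eventually_periodic[OF per, of "a + r" q] Mq by simp
  ultimately show ?thesis using rP that by blast
qed

lemma bdd_below_sum_eventually_periodic:
  fixes w :: "nat \<Rightarrow> real"
  assumes per: "\<forall>t\<ge>a. w (t + P) = w t" and P: "0 < P"
    and C: "(\<Sum>j<a + P. w j) - (\<Sum>j<a. w j) \<ge> 0"
  shows "bdd_below (range (\<lambda>N. \<Sum>j<N. w j))"
proof -
  define B where "B = Min ((\<lambda>N. \<Sum>j<N. w j) ` {..a + P})"
  have B: "B \<le> (\<Sum>j<N. w j)" if "N \<le> a + P" for N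
    unfolding B_def using that by (intro Min_le) auto
  have "B \<le> (\<Sum>j<M. w j)" for M
  proof (cases "a \<le> M")
    case True
    then obtain r q where rq: "r < P"
      "(\<Sum>j<M. w j) = (\<Sum>j<a + r. w j) + real q * ((\<Sum>j<a + P. w j) - (\<Sum>j<a. w j))"
      using sum_eventually_periodic_decomp[OF per P] by metis
    moreover have "0 \<le> real q * ((\<Sum>j<a + P. w j) - (\<Sum>j<a. w j))" using C by simp
    ultimately show ?thesis using B[of "a + r"] by linarith
  next
    case False then show ?thesis using B by simp
  qed
  then show ?thesis unfolding bdd_below_range_iff by blast
qed

lemma sum_eventually_periodic_upper_bound:
  fixes w :: "nat \<Rightarrow> real"
  assumes per: "\<forall>t\<ge>a. w (t + P) = w t" and P: "0 < P"
    and C: "(\<Sum>j<a + P. w j) - (\<Sum>j<a. w j) < 0"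
  shows "\<exists>K. \<forall>M\<ge>a. (\<Sum>j<M. w j) \<le> K + ((\<Sum>j<a + P. w j) - (\<Sum>j<a. w j)) / real P * real M"
proof -
  define C where "C = (\<Sum>j<a + P. w j) - (\<Sum>j<a. w j)"
  define B where "B = Max ((\<lambda>N. \<Sum>j<N. w j) ` {..a + P})"
  have B: "(\<Sum>j<N. w j) \<le> B" if "N \<le> a + P" for N
    unfolding B_def using that by (intro Max_ge) auto
  have "(\<Sum>j<M. w j) \<le> (B - C - C * real a / real P) + C / real P * real M" if M: "a \<le> M" for M
  proof -
    obtain r q where rq: "r < P" "real q * real P > real M - real a - real P"
       "(\<Sum>j<M. w j) = (\<Sum>j<a + r. w j) + real q * C"
      using sum_eventually_periodic_decomp[OF per P M] unfolding C_def by metis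
    have q: "real q > (real M - real a) / real P - 1" using rq(2) P
      by (simp add: field_simps)
    have "real q * C \<le> ((real M - real a) / real P - 1) * C"
      using q C unfolding C_def by (intro mult_right_mono_neg) auto
    also have "\<dots> = - C - C * real a / real P + C / real P * real M"
      using P by (simp add: field_simps)
    finally show ?thesis using rq(3) B[of "a + r"] rq(1) by linarith
  qed
  then show ?thesis unfolding C_def by blast
qed

lemma liminf_average_nonneg:
  fixes A :: "nat \<Rightarrow> real"
  assumes "bdd_below (range A)"
  shows "0 \<le> liminf (\<lambda>N. ereal (A N / real N))"
proof -
  obtain B where B: "\<And>N. min B 0 \<le> A N" using assms unfolding bdd_below_range_iff
    by (meson min.coboundedI1)
  have "eventually (\<lambda>N. ereal (min B 0 / real N) \<le> ereal (A N / real N)) sequentially"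
    using B by (intro always_eventually allI) (simp add: divide_right_mono)
  then have "liminf (\<lambda>N. ereal (min B 0 / real N)) \<le> liminf (\<lambda>N. ereal (A N / real N))"
    by (rule Liminf_mono)
  moreover have "liminf (\<lambda>N. ereal (min B 0 / real N)) = ereal 0"
    by (rule lim_imp_Liminf[OF trivial_limit_sequentially tendsto_ereal[OF lim_const_over_n]])
  ultimately show ?thesis by (simp add: zero_ereal_def)
qed

lemma liminf_average_neg:
  fixes A :: "nat \<Rightarrow> real"
  assumes bound: "eventually (\<lambda>N. A N \<le> K + c * real N) sequentially" and c: "c < 0"
  shows "liminf (\<lambda>N. ereal (A N / real N)) < 0"
proof -
  have "(\<lambda>N. K / real N + c) \<longlonglongrightarrow> 0 + c"
    by (intro tendsto_add lim_const_over_n tendsto_const)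
  then have "eventually (\<lambda>N. K / real N + c < c / 2) sequentially"
    using c by (intro order_tendstoD(2)) auto
  with bound eventually_gt_at_top[of 0]
  have "eventually (\<lambda>N. ereal (A N / real N) \<le> ereal (c / 2)) sequentially"
  proof eventually_elim
    case (elim N)
    then have "A N / real N \<le> (K + c * real N) / real N" by (intro divide_right_mono) auto
    also have "\<dots> = K / real N + c" using elim(2) by (simp add: field_simps)
    finally have "A N / real N \<le> c / 2" using elim(3) by linarith
    then show ?case by simp
  qed
  then have "liminf (\<lambda>N. ereal (A N / real N)) \<le> liminf (\<lambda>N. ereal (c / 2))" by (rule Liminf_mono)
  also have "\<dots> < 0" using c by (simp add: Liminf_const)
  finally show ?thesis .
qed

lemma Suc_le_enumerate:
  assumes "infinite W" "W \<subseteq> {1..}"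
  shows "Suc k \<le> enumerate W k"
proof (induction k)
  case 0 then show ?case using enumerate_in_set[OF assms(1), of 0] assms(2) by auto
next
  case (Suc k)
  then show ?case using enumerate_step[OF assms(1), of k] by simp
qed

lemma sum_enumerate:
  fixes w :: "nat \<Rightarrow> real"
  assumes W: "infinite W" "W \<subseteq> {1..}" and zero: "\<And>j. 1 \<le> j \<Longrightarrow> j \<notin> W \<Longrightarrow> w j = 0"
    and N: "1 \<le> N"
  shows "(\<Sum>t\<in>{1..N}. w (enumerate W (t - 1))) = (\<Sum>j\<in>{1..enumerate W (N - 1)}. w j)"
proof -
  let ?e = "enumerate W"
  have mono: "?e k \<le> ?e k' \<longleftrightarrow> k \<le> k'" for k k' using W(1) by simp
  have "(\<Sum>t\<in>{1..N}. w (?e (t - 1))) = (\<Sum>t<N. w (?e t))" by (rule sum_Suc_shift_1N)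
  also have "\<dots> = (\<Sum>j\<in>?e ` {..<N}. w j)"
    by (simp add: sum.reindex inj_on_subset[OF inj_enumerate[OF W(1)]])
  also have "\<dots> = (\<Sum>j\<in>{1..?e (N - 1)}. w j)"
  proof (rule sum.mono_neutral_left)
    show "?e ` {..<N} \<subseteq> {1..?e (N - 1)}"
    proof
      fix j assume "j \<in> ?e ` {..<N}"
      then obtain k where "k < N" "j = ?e k" by blast
      then show "j \<in> {1..?e (N - 1)}" using Suc_le_enumerate[OF W, of k] mono[of k "N - 1"] by auto
    qed
    show "\<forall>i\<in>{1..?e (N - 1)} - ?e ` {..<N}. w i = 0"
    proof
      fix i assume i: "i \<in> {1..?e (N - 1)} - ?e ` {..<N}"
      show "w i = 0"
      proof (rule zero)
        show "1 \<le> i" using i by simp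
      next
        show "i \<notin> W"
        proof
          assume "i \<in> W"
          then obtain k where k: "?e k = i" using enumerate_Ex[OF W(1)] by blast
          then have "k < N" using i mono[of k "N - 1"] N by simp
          then show False using i k by blast
        qed
      qed
    qed
  qed simp
  finally show ?thesis .
qed

lemma infinite_weighted_positions:
  fixes x y :: "nat \<Rightarrow> tv"
  assumes xy: "\<And>j. x (Suc j) = y j"
    and P: "0 < P" and per: "\<forall>t\<ge>a. y (t + P) = y t"
    and W: "\<exists>t\<ge>a. is_w (y t)"
  shows "infinite {j. 1 \<le> j \<and> is_w (x j)}"
  unfolding infinite_nat_iff_unbounded_le
proof
  fix m
  obtain t0 where t0: "t0 \<ge> a" "is_w (y t0)" using W by blast
  have "y (t0 + m * P) = y t0" using eventually_periodic_shift[OF per t0(1)] by blast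
  then have "Suc (t0 + m * P) \<in> {j. 1 \<le> j \<and> is_w (x j)}" using t0 xy by simp
  moreover have "m \<le> m * P" using P by simp
  then have "m \<le> Suc (t0 + m * P)" by linarith
  ultimately show "\<exists>n\<ge>m. n \<in> {j. 1 \<le> j \<and> is_w (x j)}" by blast
qed

lemma liminf_mean_weight_iff:
  fixes x y :: "nat \<Rightarrow> tv"
  assumes xy: "\<And>j. x (Suc j) = y j"
    and P: "0 < P" and per: "\<forall>t\<ge>a. y (t + P) = y t"
    and W: "\<exists>t\<ge>a. is_w (y t)"
  shows "(0 \<le> liminf (\<lambda>N. ereal ((\<Sum>t\<in>{1..N}. wt (x (enumerate {j. 1 \<le> j \<and> is_w (x j)} (t - 1)))) / real N)))
         \<longleftrightarrow> bdd_below (range (\<lambda>N. \<Sum>j<N. wt (y j)))"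
    (is "_ \<le> liminf (\<lambda>N. ereal (?A N / _)) \<longleftrightarrow> bdd_below (range ?s)")
proof -
  define Ws where "Ws = {j. 1 \<le> j \<and> is_w (x j)}"
  have Ws: "Ws \<subseteq> {1..}" unfolding Ws_def by auto
  have infW: "infinite Ws"
    unfolding Ws_def using infinite_weighted_positions[OF xy P per W] .
  have A_eq: "?A N = ?s (enumerate Ws (N - 1))" if "1 \<le> N" for N
  proof -
    have "?A N = (\<Sum>j\<in>{1..enumerate Ws (N - 1)}. wt (x j))" unfolding Ws_def[symmetric]
      by (rule sum_enumerate[OF infW Ws _ that]) (auto simp: Ws_def not_w_wt)
    then show ?thesis using sum_Suc_shift_1M xy by simp
  qed
  show ?thesis
  proof
    assume L: "0 \<le> liminf (\<lambda>N. ereal (?A N / real N))"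
    show "bdd_below (range ?s)"
    proof (rule ccontr)
      assume nb: "\<not> bdd_below (range ?s)"
      define C where "C = (\<Sum>j<a + P. wt (y j)) - (\<Sum>j<a. wt (y j))"
      have perw: "\<forall>t\<ge>a. wt (y (t + P)) = wt (y t)" using per by simp
      have C: "C < 0" using bdd_below_sum_eventually_periodic[OF perw P] nb unfolding C_def by force
      then obtain K where K: "\<forall>M\<ge>a. ?s M \<le> K + C / real P * real M"
        using sum_eventually_periodic_upper_bound[OF perw P] unfolding C_def by blast
      have CP: "C / real P < 0" using C P by (simp add: divide_neg_pos)
      have "eventually (\<lambda>N. ?A N \<le> K + C / real P * real N) sequentially"
        unfolding eventually_sequentially
      proof (intro exI[of _ "max a 1"] allI impI)
        fix N assume N: "max a 1 \<le> N"
        have eN: "N \<le> enumerate Ws (N - 1)" using Suc_le_enumerate[OF infW Ws, of "N - 1"] N by simp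
        have "?A N \<le> K + C / real P * real (enumerate Ws (N - 1))" using K A_eq eN N by simp
        also have "\<dots> \<le> K + C / real P * real N"
          using CP eN by (intro add_left_mono mult_left_mono_neg) auto
        finally show "?A N \<le> K + C / real P * real N" .
      qed
      then have "liminf (\<lambda>N. ereal (?A N / real N)) < 0" by (rule liminf_average_neg[OF _ CP])
      with L show False by simp
    qed
  next
    assume "bdd_below (range ?s)"
    then obtain B where B: "\<And>M. B \<le> ?s M" unfolding bdd_below_range_iff by blast
    have "min B 0 \<le> ?A N" for N
      using B[of "enumerate Ws (N - 1)"] A_eq[of N] by (cases "N = 0") auto
    then have "bdd_below (range ?A)" unfolding bdd_below_range_iff by blast
    then show "0 \<le> liminf (\<lambda>N. ereal (?A N / real N))" by (rule liminf_average_nonneg)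
  qed
qed


section \<open>The trace as the value of a walk\<close>

lemma vseq_Suc_walk: "vseq l f i (Suc j) = walk l f (f ! (l + i - 1)) j"
proof (induction j)
  case 0 then show ?case by simp
next
  case (Suc j)
  show ?case by (simp only: vseq.simps(3) Suc walk_step)
qed

lemma carry_Ex_All[simp]: "carry v TEx = TEx" "carry v TAll = TAll"
  by (cases v; simp)+

lemma idx_wt: "is_idx v \<Longrightarrow> wt v = 0" by (cases v) simp_all

lemma walk_sum_idx0: "(\<forall>j<N. is_idx (walk l f v j)) \<Longrightarrow> walk_sum l f v N = 0"
  unfolding walk_sum_def by (simp add: idx_wt)

lemma walk_sum_Suc: "walk_sum l f v (Suc N) = walk_sum l f v N + wt (walk l f v N)"
  unfolding walk_sum_def by simp

lemma walk_value_upto_closed_form: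
  assumes "\<forall>j<E. next_idx l (walk l f v j) \<noteq> None" "next_idx l (walk l f v E) = None"
  shows "walk_value_upto l f v E = (case walk l f v E of TEx \<Rightarrow> TEx | TAll \<Rightarrow> TAll
    | TIdx p \<Rightarrow> (if \<forall>j<E. is_idx (walk l f v j) then TIdx (p - l) else TW (walk_sum l f v (Suc E)) (p - l))
    | TW r p \<Rightarrow> TW (walk_sum l f v (Suc E)) (p - l))"
  using assms
proof (induction E arbitrary: v)
  case 0
  then show ?case by (cases v) (simp_all add: walk_sum_def)
next
  case (Suc E)
  from Suc.prems(1) obtain k where k: "next_idx l v = Some k" by (cases "next_idx l v") auto
  define w where "w = f ! (k - 1)"
  have pv: "walk l f v (Suc j) = walk l f w j" for j using k w_def by (simp add: walk_Suc_Some)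
  have h1: "\<forall>j<E. next_idx l (walk l f w j) \<noteq> None" using Suc.prems(1) pv by (metis Suc_mono)
  have h2: "next_idx l (walk l f w E) = None" using Suc.prems(2) pv by simp
  have IH: "walk_value_upto l f w E = (case walk l f w E of TEx \<Rightarrow> TEx | TAll \<Rightarrow> TAll
    | TIdx p \<Rightarrow> (if \<forall>j<E. is_idx (walk l f w j) then TIdx (p - l) else TW (walk_sum l f w (Suc E)) (p - l))
    | TW r p \<Rightarrow> TW (walk_sum l f w (Suc E)) (p - l))" using Suc.IH[OF h1 h2] .
  have R: "walk_value_upto l f v (Suc E) = carry v (walk_value_upto l f w E)" using k w_def by simp
  have walk_eq: "walk l f v (Suc E) = walk l f w E" using pv .
  have sum_eq: "walk_sum l f v (Suc (Suc E)) = wt v + walk_sum l f w (Suc E)"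
    using walk_sum_Suc_Some[OF k] w_def by simp
  have all_eq: "(\<forall>j<Suc E. is_idx (walk l f v j)) \<longleftrightarrow> is_idx v \<and> (\<forall>j<E. is_idx (walk l f w j))"
    using pv by (auto simp: less_Suc_eq_0_disj)
  have v_cases: "(\<exists>c. v = TIdx c) \<or> (\<exists>r c. v = TW r c)" using k by (cases v) auto
  show ?case
  proof (cases "walk l f w E")
    case (TIdx p)
    show ?thesis
    proof (cases "\<forall>j<E. is_idx (walk l f w j)")
      case True
      have z: "walk_sum l f w (Suc E) = 0" using True TIdx by (intro walk_sum_idx0) (auto simp: less_Suc_eq)
      from v_cases show ?thesis
        using R IH TIdx True walk_eq sum_eq all_eq z by auto
    next
      case False
      from v_cases show ?thesis
        using R IH TIdx False walk_eq sum_eq all_eq by auto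
    qed
  next
    case (TW r p)
    from v_cases show ?thesis using R IH TW walk_eq sum_eq by auto
  next
    case TEx then show ?thesis using R IH walk_eq by simp
  next
    case TAll then show ?thesis using R IH walk_eq by simp
  qed
qed

lemma walk_next_of_not_exits: "\<not> exits l f v \<Longrightarrow> \<exists>k. next_idx l (walk l f v j) = Some k"
  unfolding exits_def by auto

lemma walk_in_range: "walk l f v j \<in> insert v ((\<lambda>k. f ! (k - 1)) ` {1..l})"
proof (induction j)
  case (Suc j)
  show ?case
  proof (cases "next_idx l (walk l f v j)")
    case None
    then show ?thesis using Suc by (simp add: walk_step)
  next
    case (Some k)
    then have "k \<in> {1..l}" by (auto simp: next_idx_Some)
    then show ?thesis using Some by (simp add: walk_step)
  qed
qed simp

lemma walk_eventually_periodic: "\<exists>a P. 0 < P \<and> (\<forall>t\<ge>a. walk l f v (t + P) = walk l f v t)"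
proof -
  have "range (walk l f v) \<subseteq> insert v ((\<lambda>k. f ! (k - 1)) ` {1..l})"
    using walk_in_range by blast
  then have "finite (range (walk l f v))" by (rule finite_subset) simp
  then have "\<not> inj (walk l f v)" using finite_imageD infinite_UNIV_nat by blast
  then obtain a b where ab: "a < b" "walk l f v a = walk l f v b"
    unfolding inj_def by (metis linorder_neq_iff)
  have "walk l f v (t + (b - a)) = walk l f v t" if "a \<le> t" for t
    using walk_det[OF ab(2), of "t - a"] that ab(1) by (simp add: add.commute)
  then show ?thesis using ab(1) by (intro exI[of _ a] exI[of _ "b - a"]) auto
qed

text \<open>The no-collision condition of Shom means that an index entry is the only entry
  pointing to its target. Hence a cycle of the walk consisting of index entries only could not
  have been entered from the outside, in particular not from the starting input wire.\<close>

lemma no_index_cycle_from_input: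
  fixes y :: "nat \<Rightarrow> tv" and s :: "nat \<Rightarrow> nat"
  assumes entries: "\<And>j. y j = f ! s j"
    and inj: "\<And>j j' c. y j = TIdx c \<Longrightarrow> target (y j') = Some c \<Longrightarrow> s j = s j'"
    and succ: "\<And>j. target (y j) = Some (Suc (s (Suc j)))"
    and start: "\<And>j. s (Suc j) < s 0"
    and per: "\<forall>t\<ge>a. y (t + P) = y t" and P: "0 < P"
    and idx: "\<And>t. a \<le> t \<Longrightarrow> is_idx (y t)"
  shows False
proof -
  have next_y: "y (Suc j) = f ! (the (target (y j)) - 1)" for j
    using entries[of "Suc j"] succ[of j] by simp
  have det: "y (j + t) = y (j' + t)" if "y j = y j'" for j j' t
    using that by (induction t) (simp_all only: add_Suc_right add_0_right next_y)
  define a0 where "a0 = (LEAST a'. y (a' + P) = y a')"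
  have a0: "y (a0 + P) = y a0" unfolding a0_def by (rule LeastI[of _ a]) (rule per[rule_format, OF order_refl])
  have per0: "y (t + P) = y t" if "a0 \<le> t" for t
    using det[OF a0, of "t - a0"] that by (simp add: add.commute add.left_commute)
  have idx0: "\<exists>c. y t = TIdx c" if "a0 \<le> t" for t
  proof -
    have "y (t + a * P) = y t" using eventually_periodic_shift[of a0 y P t a] per0 that by blast
    moreover have "a \<le> t + a * P" using P by (simp add: trans_le_add2)
    ultimately have "is_idx (y t)" using idx by metis
    then show ?thesis by (cases "y t") auto
  qed
  show False
  proof (cases a0)
    case 0
    obtain c where c: "y P = TIdx c" using idx0 0 by blast
    moreover have "y 0 = TIdx c" using c a0 0 by simp
    then have "target (y 0) = Some c" by simp
    ultimately have "s P = s 0" by (rule inj)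
    then show False using start[of "P - 1"] P by simp
  next
    case (Suc a1)
    have "a0 \<le> Suc a1 + P" "a0 \<le> a1 + P" using Suc P by simp_all
    then obtain c c' where c: "y (Suc a1 + P) = TIdx c" and c': "y (a1 + P) = TIdx c'"
      using idx0 by blast
    have "y (Suc a1) = TIdx c" using c a0 Suc by simp
    then have "target (y (Suc a1)) = Some c" by simp
    then have "s (Suc a1 + P) = s (Suc a1)" by (rule inj[OF c])
    then have "target (y (a1 + P)) = target (y a1)" using succ[of a1] succ[of "a1 + P"] by simp
    then have "target (y a1) = Some c'" using c' by simp
    then have "s (a1 + P) = s a1" by (rule inj[OF c'])
    then have "y (a1 + P) = y a1" using entries by simp
    then have "a0 \<le> a1" unfolding a0_def by (rule Least_le)
    then show False using Suc by simp
  qed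
qed

lemma walk_from_input_weighted:
  assumes f: "f \<in> Shom (l + m) (l + n)" and i: "1 \<le> i" "i \<le> m"
    and nf: "\<not> exits l f (f ! (l + i - 1))" and P: "0 < P"
    and per: "\<forall>t\<ge>a. walk l f (f ! (l + i - 1)) (t + P) = walk l f (f ! (l + i - 1)) t"
  shows "\<exists>t\<ge>a. is_w (walk l f (f ! (l + i - 1)) t)"
proof (rule ccontr)
  assume nW: "\<not> (\<exists>t\<ge>a. is_w (walk l f (f ! (l + i - 1)) t))"
  define y where "y = walk l f (f ! (l + i - 1))"
  have nx: "\<exists>k. next_idx l (y j) = Some k" for j using walk_next_of_not_exits[OF nf] y_def by blast
  define s where "s j = (if j = 0 then l + i - 1 else the (next_idx l (y (j - 1))) - 1)" for j
  have entries: "y j = f ! (s j)" for j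
  proof (cases j)
    case 0 then show ?thesis by (simp add: y_def s_def)
  next
    case (Suc j')
    obtain k where k: "next_idx l (y j') = Some k" using nx by blast
    then show ?thesis using Suc by (simp add: y_def s_def walk_step)
  qed
  have succ: "s (Suc j) < l" "target (y j) = Some (Suc (s (Suc j)))" for j
  proof -
    obtain k where k: "next_idx l (y j) = Some k" using nx by blast
    then have "target (y j) = Some k" "1 \<le> k" "k \<le> l" by (auto simp: next_idx_Some)
    then show "s (Suc j) < l" "target (y j) = Some (Suc (s (Suc j)))" using k by (auto simp: s_def)
  qed
  have s0: "s 0 = l + i - 1" by (simp add: s_def)
  have bound: "s j < l + m" for j using succ(1)[of "j - 1"] s0 i by (cases j) auto
  show False
  proof (rule no_index_cycle_from_input[of y f s])
    show "s j = s j'" if "y j = TIdx c" "target (y j') = Some c" for j j' c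
      using ShomD(3)[OF f bound[of j] bound[of j']] that entries by auto
    show "s (Suc j) < s 0" for j using succ(1)[of j] s0 i by simp
    show "is_idx (y t)" if "a \<le> t" for t
      using nW that nx[of t] unfolding y_def by (cases "walk l f (f ! (l + i - 1)) t") auto
  qed (use entries succ(2) per P y_def in auto)
qed

lemma vseq_exits_iff:
  "(\<exists>K\<ge>1. next_idx l (vseq l f i K) = None) \<longleftrightarrow> exits l f (f ! (l + i - 1))"
  unfolding exits_def using vseq_Suc_walk by (metis One_nat_def Suc_le_D Suc_le_mono le0)

lemma trace_at_exits:
  assumes ex: "exits l f (f ! (l + i - 1))"
  shows "trace_at l f i = walk_value l f (f ! (l + i - 1))"
proof -
  define v0 where "v0 = f ! (l + i - 1)"
  have vs: "vseq l f i (Suc j) = walk l f v0 j" for j using vseq_Suc_walk v0_def by simp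
  define E where "E = (LEAST j. next_idx l (walk l f v0 j) = None)"
  obtain j0 where "next_idx l (walk l f v0 j0) = None" using ex unfolding exits_def v0_def by blast
  then have E_exit: "next_idx l (walk l f v0 E) = None" unfolding E_def by (rule LeastI)
  have E_before: "\<forall>j<E. next_idx l (walk l f v0 j) \<noteq> None" unfolding E_def using not_less_Least by blast
  have LK: "(LEAST K. K \<ge> 1 \<and> next_idx l (vseq l f i K) = None) = Suc E"
  proof -
    have "(LEAST K. K \<ge> 1 \<and> next_idx l (vseq l f i K) = None) =
        Suc (LEAST m. Suc m \<ge> 1 \<and> next_idx l (vseq l f i (Suc m)) = None)"
      by (rule Least_Suc[of _ "Suc E"]) (use E_exit vs in auto)
    then show ?thesis unfolding E_def vs by simp
  qed
  have S: "(\<Sum>j\<in>{1..Suc E}. wt (vseq l f i j)) = walk_sum l f v0 (Suc E)"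
    unfolding sum_Suc_shift_1M vs walk_sum_def ..
  have I: "(\<forall>j\<in>{1..<Suc E}. is_idx (vseq l f i j)) \<longleftrightarrow> (\<forall>j<E. is_idx (walk l f v0 j))"
    unfolding atLeastLessThanSuc_atLeastAtMost image_Suc_lessThan[symmetric] using vs by auto
  have "trace_at l f i = (case vseq l f i (Suc E) of TEx \<Rightarrow> TEx | TAll \<Rightarrow> TAll
    | TIdx p \<Rightarrow> (if \<forall>j\<in>{1..<Suc E}. is_idx (vseq l f i j) then TIdx (p - l)
                 else TW (\<Sum>j\<in>{1..Suc E}. wt (vseq l f i j)) (p - l))
    | TW r p \<Rightarrow> TW (\<Sum>j\<in>{1..Suc E}. wt (vseq l f i j)) (p - l))"
    unfolding trace_at_def Let_def LK using vseq_exits_iff ex by (simp only: if_True)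
  also have "\<dots> = walk_value_upto l f v0 E"
    unfolding S I vs using walk_value_upto_closed_form[OF E_before E_exit] ..
  also have "\<dots> = walk_value l f v0" using walk_value_exits[OF E_exit] by simp
  finally show ?thesis unfolding v0_def .
qed

lemma trace_at_walk_value:
  assumes f: "f \<in> Shom (l + m) (l + n)" and i: "1 \<le> i" "i \<le> m"
  shows "trace_at l f i = walk_value l f (f ! (l + i - 1))"
proof (cases "exits l f (f ! (l + i - 1))")
  case True
  then show ?thesis by (rule trace_at_exits)
next
  case False
  define v0 where "v0 = f ! (l + i - 1)"
  have vs: "vseq l f i (Suc j) = walk l f v0 j" for j using vseq_Suc_walk v0_def by simp
  obtain a P where aP: "0 < P" "\<forall>t\<ge>a. walk l f v0 (t + P) = walk l f v0 t"
    using walk_eventually_periodic by blast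
  have W: "\<exists>t\<ge>a. is_w (walk l f v0 t)"
    using walk_from_input_weighted[OF f i False aP(1)] aP(2) v0_def by blast
  have "trace_at l f i = verdict (bdd_below (range (\<lambda>N. \<Sum>j<N. wt (walk l f v0 j))))"
    unfolding trace_at_def Let_def verdict_def
    using vseq_exits_iff False liminf_mean_weight_iff[OF vs aP W] v0_def by (simp only: if_False)
  also have "\<dots> = walk_value l f v0" using False v0_def by (simp add: walk_value_def walk_sum_def[abs_def])
  finally show ?thesis unfolding v0_def .
qed


lemma unshift_add_wt: "unshift l (add_wt r x) = add_wt r (unshift l x)"
  by (cases x) simp_all

lemma next_add_wt[simp]: "next_idx l (add_wt r x) = next_idx l x"
  by (cases x) simp_all

lemma carry_add_wt: "target u \<noteq> None \<Longrightarrow> carry (add_wt r u) x = add_wt r (carry u x)"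
  by (cases u) simp_all

lemma walk_value_add_wt: "walk_value l f (add_wt r u) = add_wt r (walk_value l f u)"
proof (cases "next_idx l u")
  case None
  then show ?thesis by (simp add: walk_value_exit unshift_add_wt)
next
  case (Some k)
  then have "target u \<noteq> None" by (cases u) auto
  then show ?thesis using Some by (simp add: walk_value_Some carry_add_wt)
qed

lemma walk_value_carry: "walk_value l f (carry u x) = carry u (walk_value l f x)"
  by (cases u) (simp_all add: walk_value_add_wt)

lemma walk_value_chain:
  assumes "\<forall>i<j. next_idx l (walk l f v i) \<noteq> None" "walk_value l f (walk l f v j) = verdict b"
  shows "walk_value l f v = verdict b"
  using assms
proof (induction j arbitrary: v)
  case 0 then show ?case by simp
next
  case (Suc j)
  obtain k where k: "next_idx l v = Some k" using Suc.prems(1) by (cases "next_idx l v") auto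
  have "\<forall>i<j. next_idx l (walk l f (f ! (k - 1)) i) \<noteq> None"
  proof (intro allI impI)
    fix i assume "i < j"
    then have "next_idx l (walk l f v (Suc i)) \<noteq> None" using Suc.prems(1) by simp
    then show "next_idx l (walk l f (f ! (k - 1)) i) \<noteq> None" using k by (simp add: walk_Suc_Some)
  qed
  moreover have "walk_value l f (walk l f (f ! (k - 1)) j) = verdict b" using Suc.prems(2) k by (simp add: walk_Suc_Some)
  ultimately have "walk_value l f (f ! (k - 1)) = verdict b" by (rule Suc.IH)
  then show ?case using k by (simp add: walk_value_Some)
qed

lemma walk_value_verdict[simp]: "walk_value l f (verdict b) = verdict b"
  by (simp add: walk_value_exit verdict_def)

lemma walk_simulation:
  assumes stepc: "\<And>u. u \<in> D \<Longrightarrow> next_idx l' (\<rho> u) = map_option \<pi> (next_idx l u)"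
    and succ: "\<And>u k. u \<in> D \<Longrightarrow> next_idx l u = Some k \<Longrightarrow> f ! (k - 1) \<in> D \<and> f' ! (\<pi> k - 1) = \<rho> (f ! (k - 1))"
    and v: "v \<in> D"
  shows "walk l f v j \<in> D \<and> walk l' f' (\<rho> v) j = \<rho> (walk l f v j)"
proof (induction j)
  case 0 then show ?case using v by simp
next
  case (Suc j)
  show ?case
  proof (cases "next_idx l (walk l f v j)")
    case None
    then have "next_idx l' (walk l' f' (\<rho> v) j) = None" using Suc stepc by simp
    then show ?thesis using None Suc by (simp add: walk_step)
  next
    case (Some k)
    then have "next_idx l' (walk l' f' (\<rho> v) j) = Some (\<pi> k)" using Suc stepc by simp
    moreover have "f ! (k - 1) \<in> D \<and> f' ! (\<pi> k - 1) = \<rho> (f ! (k - 1))" using succ Suc Some by blast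
    ultimately show ?thesis using Some Suc by (simp add: walk_step)
  qed
qed

lemma walk_value_simulation_exits:
  assumes stepc: "\<And>u. u \<in> D \<Longrightarrow> next_idx l' (\<rho> u) = map_option \<pi> (next_idx l u)"
    and succ: "\<And>u k. u \<in> D \<Longrightarrow> next_idx l u = Some k \<Longrightarrow> f ! (k - 1) \<in> D \<and> f' ! (\<pi> k - 1) = \<rho> (f ! (k - 1))"
    and outc: "\<And>u. u \<in> D \<Longrightarrow> next_idx l u = None \<Longrightarrow> unshift l' (\<rho> u) = h (unshift l u)"
    and combc: "\<And>u x. u \<in> D \<Longrightarrow> next_idx l u \<noteq> None \<Longrightarrow> carry (\<rho> u) (h x) = h (carry u x)"
    and u: "u \<in> D" and exit: "next_idx l (walk l f u K) = None"
  shows "walk_value l' f' (\<rho> u) = h (walk_value l f u)"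
  using u exit
proof (induction K arbitrary: u)
  case 0
  then show ?case using stepc[of u] outc[of u] by (simp add: walk_value_exit)
next
  case (Suc K)
  show ?case
  proof (cases "next_idx l u")
    case None
    then show ?thesis using stepc[of u] outc[of u] Suc.prems by (simp add: walk_value_exit)
  next
    case (Some k)
    have w: "f ! (k - 1) \<in> D" "f' ! (\<pi> k - 1) = \<rho> (f ! (k - 1))" using succ Suc.prems(1) Some by blast+
    have "next_idx l (walk l f (f ! (k - 1)) K) = None" using Suc.prems(2) Some by (simp add: walk_Suc_Some)
    then have IH: "walk_value l' f' (\<rho> (f ! (k - 1))) = h (walk_value l f (f ! (k - 1)))"
      using Suc.IH w(1) by blast
    have "next_idx l' (\<rho> u) = Some (\<pi> k)" using stepc Suc.prems(1) Some by simp
    then have "walk_value l' f' (\<rho> u) = carry (\<rho> u) (walk_value l' f' (f' ! (\<pi> k - 1)))"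
      by (rule walk_value_Some)
    also have "\<dots> = carry (\<rho> u) (h (walk_value l f (f ! (k - 1))))" using w(2) IH by simp
    also have "\<dots> = h (carry u (walk_value l f (f ! (k - 1))))" using combc Suc.prems(1) Some by simp
    also have "\<dots> = h (walk_value l f u)" using Some by (simp add: walk_value_Some)
    finally show ?thesis .
  qed
qed

lemma walk_value_corr:
  assumes stepc: "\<And>u. u \<in> D \<Longrightarrow> next_idx l' (\<rho> u) = map_option \<pi> (next_idx l u)"
    and succ: "\<And>u k. u \<in> D \<Longrightarrow> next_idx l u = Some k \<Longrightarrow> f ! (k - 1) \<in> D \<and> f' ! (\<pi> k - 1) = \<rho> (f ! (k - 1))"
    and wtc: "\<And>u. u \<in> D \<Longrightarrow> next_idx l u \<noteq> None \<Longrightarrow> wt (\<rho> u) = wt u"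
    and outc: "\<And>u. u \<in> D \<Longrightarrow> next_idx l u = None \<Longrightarrow> unshift l' (\<rho> u) = h (unshift l u)"
    and combc: "\<And>u x. u \<in> D \<Longrightarrow> next_idx l u \<noteq> None \<Longrightarrow> carry (\<rho> u) (h x) = h (carry u x)"
    and hsg: "\<And>b. h (verdict b) = verdict b"
    and v: "v \<in> D"
  shows "walk_value l' f' (\<rho> v) = h (walk_value l f v)"
proof (cases "exits l f v")
  case True
  then obtain K where K: "next_idx l (walk l f v K) = None" unfolding exits_def by blast
  show ?thesis by (rule walk_value_simulation_exits[OF stepc succ outc combc v K])
next
  case False
  note sim = walk_simulation[OF stepc succ v]
  have "exits l' f' (\<rho> v) \<longleftrightarrow> exits l f v"
    unfolding exits_def using sim stepc by simp
  moreover have "walk_sum l' f' (\<rho> v) = walk_sum l f v"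
    using False sim wtc unfolding walk_sum_def[abs_def] exits_def by simp
  ultimately show ?thesis using False hsg unfolding walk_value_def by simp
qed

lemma Str_length[simp]: "length (Str l f) = length f - l"
  by (simp add: Str_def del: upt_Suc)

lemma Str_nth: "j < length f - l \<Longrightarrow> Str l f ! j = trace_at l f (Suc j)"
  by (simp add: Str_def del: upt_Suc)

lemma Str_nth_walk_value:
  assumes f: "f \<in> Shom (l + m) (l + n)" and j: "j < m"
  shows "Str l f ! j = walk_value l f (f ! (l + j))"
proof -
  have "length f = l + m" using ShomD(1)[OF f] .
  then have "Str l f ! j = trace_at l f (Suc j)" using j by (simp add: Str_nth)
  also have "\<dots> = walk_value l f (f ! (l + Suc j - 1))" using trace_at_walk_value[OF f, of "Suc j"] j by simp
  finally show ?thesis by simp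
qed

lemma Str_eqI:
  assumes f: "f \<in> Shom (l + m) (l + n)" and g: "length g = m"
    and "\<And>j. j < m \<Longrightarrow> walk_value l f (f ! (l + j)) = g ! j"
  shows "Str l f = g"
proof (rule nth_equalityI)
  show "length (Str l f) = length g" using ShomD(1)[OF f] g by simp
  fix j assume "j < length (Str l f)"
  then have "j < m" using ShomD(1)[OF f] by simp
  then show "Str l f ! j = g ! j" using Str_nth_walk_value[OF f] assms(3) by simp
qed

section \<open>Tracing out one wire\<close>

definition loop_value :: "tv \<Rightarrow> tv" where
  "loop_value u = (case next_idx 1 u of None \<Rightarrow> unshift 1 u | Some _ \<Rightarrow> verdict (0 \<le> wt u))"

definition trace1_entry :: "tv \<Rightarrow> tv \<Rightarrow> tv" where
  "trace1_entry v u = (case next_idx 1 v of None \<Rightarrow> unshift 1 v | Some _ \<Rightarrow> carry v (loop_value u))"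

lemma walk_value_one_self: "walk_value 1 f (f ! 0) = loop_value (f ! 0)"
proof (cases "next_idx 1 (f ! 0)")
  case None then show ?thesis by (simp add: walk_value_exit loop_value_def)
next
  case (Some k)
  then have "k = 1" by (auto simp: next_idx_Some)
  then have "walk_value 1 f (f ! 0) = verdict (0 \<le> wt (f ! 0))" using walk_value_selfloop[OF Some] by simp
  then show ?thesis using Some by (simp add: loop_value_def)
qed

lemma walk_value_one: "walk_value 1 f v = trace1_entry v (f ! 0)"
proof (cases "next_idx 1 v")
  case None then show ?thesis by (simp add: walk_value_exit trace1_entry_def)
next
  case (Some k)
  then have "k = 1" by (auto simp: next_idx_Some)
  have "walk_value 1 f v = carry v (walk_value 1 f (f ! (k - 1)))" by (rule walk_value_Some[OF Some])
  then show ?thesis using Some \<open>k = 1\<close> walk_value_one_self[of f] by (simp add: trace1_entry_def)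
qed

lemma target_carry[simp]: "target (carry v x) = target x" by (cases v) simp_all
lemma target_unshift: "target (unshift l v) = map_option (\<lambda>p. p - l) (target v)" by (cases v) simp_all
lemma target_verdict[simp]: "target (verdict b) = None" by (simp add: verdict_def)

lemma in_T_trace1_entry:
  assumes "in_T (Suc n) v" "in_T (Suc n) u"
  shows "in_T n (trace1_entry v u)"
proof -
  have G: "in_T n (loop_value u)" using assms(2) unfolding loop_value_def
    by (cases u) (auto simp: verdict_def)
  show ?thesis using assms(1) G unfolding trace1_entry_def in_T_target
    by (cases v) auto
qed

lemma trace1_entry_TIdx_D: "trace1_entry v u = TIdx c \<Longrightarrow> in_T (Suc n) v \<Longrightarrow> (v = TIdx (Suc c)) \<or> (v = TIdx 1 \<and> u = TIdx (Suc c))"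
  unfolding trace1_entry_def loop_value_def
  by (cases v; cases u) (auto simp: verdict_def split: if_splits)

lemma trace1_entry_target_D: "target (trace1_entry v u) = Some c \<Longrightarrow> in_T (Suc n) v \<Longrightarrow> in_T (Suc n) u \<Longrightarrow>
    (target v = Some (Suc c)) \<or> (target v = Some 1 \<and> target u = Some (Suc c))"
  unfolding trace1_entry_def loop_value_def
  by (cases v; cases u) (auto simp: verdict_def split: if_splits)

lemma Str1_nth:
  assumes f: "f \<in> Shom (1 + m) (1 + n)" and j: "j < m"
  shows "Str 1 f ! j = trace1_entry (f ! Suc j) (f ! 0)"
  using Str_nth_walk_value[OF f j] walk_value_one by simp

lemma Str1_Shom:
  assumes f: "f \<in> Shom (1 + m) (1 + n)"
  shows "Str 1 f \<in> Shom m n"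
  unfolding Shom_iff
proof (intro conjI allI impI)
  note F = ShomD[OF f]
  show "length (Str 1 f) = m" using F(1) by simp
  have i0: "in_T (Suc n) (f ! 0)" using F(2)[of 0] by simp
  fix i assume i: "i < m"
  show "in_T n (Str 1 f ! i)" using Str1_nth[OF f i] in_T_trace1_entry F(2)[of "Suc i"] i i0 by simp
next
  note F = ShomD[OF f]
  have i0: "in_T (Suc n) (f ! 0)" using F(2)[of 0] by simp
  fix i j c assume ij: "i < m" "j < m" "i \<noteq> j" and e: "Str 1 f ! i = TIdx c"
  have ii: "in_T (Suc n) (f ! Suc i)" "in_T (Suc n) (f ! Suc j)" using F(2) ij by simp_all
  have ei: "trace1_entry (f ! Suc i) (f ! 0) = TIdx c" using e Str1_nth[OF f ij(1)] by simp
  show "target (Str 1 f ! j) \<noteq> Some c"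
  proof
    assume "target (Str 1 f ! j) = Some c"
    then have ej: "target (trace1_entry (f ! Suc j) (f ! 0)) = Some c" using Str1_nth[OF f ij(2)] by simp
    have inj: "\<And>a b k. a < 1 + m \<Longrightarrow> b < 1 + m \<Longrightarrow> a \<noteq> b \<Longrightarrow> f ! a = TIdx k \<Longrightarrow> target (f ! b) \<noteq> Some k"
      using F(3) by blast
    from trace1_entry_TIdx_D[OF ei ii(1)] trace1_entry_target_D[OF ej ii(2) i0] show False
      using inj[of "Suc i" "Suc j"] inj[of "Suc i" 0] inj[of 0 "Suc j"] ij by auto
  qed
qed

lemma tle_loop_value: assumes "tle u u'" shows "tle (loop_value u) (loop_value u')"
proof -
  from assms consider "u = u'" | "u = TEx" | "u' = TAll" | r1 r2 i where "u = TW r1 i" "u' = TW r2 i" "r2 \<le> r1"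
    unfolding tle_iff by blast
  then show ?thesis
  proof cases
    case 1 then show ?thesis by simp
  next
    case 2 then show ?thesis by (simp add: loop_value_def)
  next
    case 3 then show ?thesis by (simp add: loop_value_def)
  next
    case 4
    show ?thesis
    proof (cases "i = 1")
      case True
      then show ?thesis using 4 by (simp add: loop_value_def verdict_def)
    next
      case False
      then have "loop_value u = TW r1 (i - 1)" "loop_value u' = TW r2 (i - 1)" using 4 by (auto simp: loop_value_def)
      then show ?thesis using 4 by (simp add: tle_iff)
    qed
  qed
qed

lemma tle_carry: "tle x y \<Longrightarrow> tle (carry v x) (carry v y)"
  by (cases v) (simp_all add: tle_add_wt)

lemma tle_trace1_entry: "tle v v' \<Longrightarrow> tle u u' \<Longrightarrow> tle (trace1_entry v u) (trace1_entry v' u')"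
proof -
  assume vv: "tle v v'" and uu: "tle u u'"
  have G: "tle (loop_value u) (loop_value u')" using tle_loop_value[OF uu] .
  from vv consider "v = v'" | "v = TEx" | "v' = TAll" | r1 r2 i where "v = TW r1 i" "v' = TW r2 i" "r2 \<le> r1"
    unfolding tle_iff by blast
  then show ?thesis
  proof cases
    case 1 then show ?thesis using G by (cases "next_idx 1 v") (auto simp: trace1_entry_def tle_carry)
  next
    case 2 then show ?thesis by (simp add: trace1_entry_def)
  next
    case 3 then show ?thesis by (simp add: trace1_entry_def)
  next
    case 4
    show ?thesis
    proof (cases "next_idx 1 v")
      case None then show ?thesis using 4 by (simp add: trace1_entry_def tle_iff)
    next
      case (Some k)
      then have "next_idx 1 v' = Some k" using 4 by simp
      then have "trace1_entry v' u' = add_wt r2 (loop_value u')" using 4 by (simp add: trace1_entry_def)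
      moreover have "trace1_entry v u = add_wt r1 (loop_value u)" using 4 Some by (simp add: trace1_entry_def)
      moreover have "tle (add_wt r1 (loop_value u)) (add_wt r2 (loop_value u))" using 4 by (simp add: tle_add_wt_w)
      moreover have "tle (add_wt r2 (loop_value u)) (add_wt r2 (loop_value u'))" using G by (rule tle_add_wt)
      ultimately show ?thesis using tle_trans by metis
    qed
  qed
qed

lemma Str1_mono:
  assumes f: "f \<in> Shom (1 + m) (1 + n)" and f': "f' \<in> Shom (1 + m) (1 + n)" and le: "hle f f'"
  shows "hle (Str 1 f) (Str 1 f')"
  unfolding hle_iff
proof (intro conjI allI impI)
  show "length (Str 1 f) = length (Str 1 f')" using ShomD(1)[OF f] ShomD(1)[OF f'] by simp
  fix i assume "i < length (Str 1 f)"
  then have i: "i < m" using ShomD(1)[OF f] by simp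
  have l: "length f = 1 + m" using ShomD(1)[OF f] .
  have "tle (f ! Suc i) (f' ! Suc i)" "tle (f ! 0) (f' ! 0)" using le i l unfolding hle_iff by auto
  then show "tle (Str 1 f ! i) (Str 1 f' ! i)" using Str1_nth[OF f i] Str1_nth[OF f' i] tle_trace1_entry by simp
qed


section \<open>Contraction of the first wire\<close>

text \<open>The position in the walk x of the j-th step of the walk with wire 1 traced out: a step
  into wire 1 is merged with the step after it.\<close>

fun uncontract_index :: "(nat \<Rightarrow> tv) \<Rightarrow> nat \<Rightarrow> nat" where
  "uncontract_index x 0 = 0"
| "uncontract_index x (Suc j) = uncontract_index x j + (if target (x (uncontract_index x j)) = Some 1 then 2 else 1)"


lemma bdd_below_range_comp_iff:
  fixes s :: "nat \<Rightarrow> real" and \<sigma> :: "nat \<Rightarrow> nat"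
  assumes \<sigma>0: "\<sigma> 0 = 0" and gap: "\<And>j. \<sigma> (Suc j) \<in> {Suc (\<sigma> j), Suc (Suc (\<sigma> j))}"
    and step: "\<And>N. \<bar>s (Suc N) - s N\<bar> \<le> W"
  shows "bdd_below (range (s \<circ> \<sigma>)) \<longleftrightarrow> bdd_below (range s)"
proof
  assume "bdd_below (range (s \<circ> \<sigma>))"
  then obtain B where B: "\<And>j. B \<le> s (\<sigma> j)" unfolding bdd_below_range_iff by auto
  have near: "\<exists>j. \<sigma> j \<le> N \<and> N \<le> Suc (\<sigma> j)" for N
  proof (induction N)
    case 0
    show ?case using \<sigma>0 by auto
  next
    case (Suc N)
    then obtain j where j: "\<sigma> j \<le> N" "N \<le> Suc (\<sigma> j)" by blast
    show ?case
    proof (cases "N = Suc (\<sigma> j)")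
      case True
      then show ?thesis using gap[of j] by (intro exI[of _ "Suc j"]) auto
    next
      case False
      then show ?thesis using j by (intro exI[of _ j]) auto
    qed
  qed
  have "B - W \<le> s N" for N
  proof -
    obtain j where "\<sigma> j \<le> N" "N \<le> Suc (\<sigma> j)" using near by blast
    then consider "N = \<sigma> j" | "N = Suc (\<sigma> j)" by linarith
    then show ?thesis using B[of j] step[of 0] step[of "\<sigma> j"] by cases auto
  qed
  then show "bdd_below (range s)" unfolding bdd_below_range_iff by blast
next
  assume "bdd_below (range s)"
  then show "bdd_below (range (s \<circ> \<sigma>))" by (rule bdd_below_mono) auto
qed

lemma next_carry[simp]: "next_idx l (carry z x) = next_idx l x" by (cases z) simp_all

lemma wt_unshift[simp]: "wt (unshift l v) = wt v" by (cases v) simp_all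
lemma wt_add_wt: "target x \<noteq> None \<Longrightarrow> wt (add_wt r x) = r + wt x" by (cases x) simp_all
lemma wt_carry: "target x \<noteq> None \<Longrightarrow> wt (carry v x) = wt v + wt x" by (cases v) (simp_all add: wt_add_wt)
lemma carry_unshift: "carry (unshift l v) x = carry v x" by (cases v) simp_all

lemma next_idx_Suc_Some_cases:
  assumes "next_idx (Suc l) u = Some k"
  obtains "k = 1" | k' where "k = Suc k'" "1 \<le> k'" "k' \<le> l"
proof -
  have "1 \<le> k" "k \<le> Suc l" using assms by (auto simp: next_idx_Some)
  then show ?thesis using that(1) that(2)[of "k - 1"] by (cases "k = 1") auto
qed

lemma trace1_entry_exit:
  assumes "next_idx (Suc l) u = None"
  shows "trace1_entry u w = unshift 1 u" "next_idx l (trace1_entry u w) = None"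
    "unshift l (trace1_entry u w) = unshift (Suc l) u"
  using assms by (cases u; auto simp: trace1_entry_def split: if_splits)+

lemma trace1_entry_wire1: "target u = Some 1 \<Longrightarrow> trace1_entry u w = carry u (loop_value w)"
  by (cases u) (auto simp: trace1_entry_def)

lemma trace1_entry_wire_Suc:
  assumes "target u = Some (Suc k)" "1 \<le> k" "k \<le> l"
  shows "trace1_entry u w = unshift 1 u" "next_idx l (trace1_entry u w) = Some k"
  using assms by (cases u; auto simp: trace1_entry_def)+

lemma loop_value_exit: "target w \<noteq> Some 1 \<Longrightarrow> loop_value w = unshift 1 w"
  by (cases w) (auto simp: loop_value_def)

lemma loop_value_loop: "target w = Some 1 \<Longrightarrow> loop_value w = verdict (0 \<le> wt w)"
  by (cases w) (auto simp: loop_value_def)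

text \<open>The walk of the contracted system visits exactly the positions of the original walk that
  are not on wire 1, each visit of wire 1 being absorbed into the weight of the preceding step,
  unless wire 1 feeds back to itself, in which case both walks end in the same verdict.\<close>

locale first_wire_contraction =
  fixes l m n :: nat and f :: "tv list"
  assumes f_hom: "f \<in> Shom (Suc l + m) (Suc l + n)"
begin

abbreviation traced1 :: "tv list" where "traced1 \<equiv> Str 1 f"

abbreviation contract :: "tv \<Rightarrow> tv" where "contract u \<equiv> trace1_entry u (f ! 0)"

abbreviation orig_pos :: "tv \<Rightarrow> nat \<Rightarrow> nat" where
  "orig_pos u \<equiv> uncontract_index (walk (Suc l) f u)"

lemma f_hom1: "f \<in> Shom (1 + (l + m)) (1 + (l + n))"
  using f_hom by simp

lemma traced1_hom: "traced1 \<in> Shom (l + m) (l + n)"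
  by (rule Str1_Shom[OF f_hom1])

lemma traced1_nth: "1 \<le> k \<Longrightarrow> k \<le> l \<Longrightarrow> traced1 ! (k - 1) = contract (f ! k)"
  using Str1_nth[OF f_hom1, of "k - 1"] by simp

lemma walk_value_contract_exits:
  "next_idx (Suc l) (walk (Suc l) f u K) = None \<Longrightarrow>
    walk_value (Suc l) f u = walk_value l traced1 (contract u)"
proof (induction K arbitrary: u)
  case 0
  then show ?case using trace1_entry_exit[of l u] by (simp add: walk_value_exit)
next
  case (Suc K)
  show ?case
  proof (cases "next_idx (Suc l) u")
    case None
    then show ?thesis using trace1_entry_exit[OF None] by (simp add: walk_value_exit)
  next
    case (Some k)
    have tk: "target u = Some k" using Some by (simp add: next_idx_Some)
    have nK: "next_idx (Suc l) (walk (Suc l) f (f ! (k - 1)) K) = None"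
      using Suc.prems Some by (simp add: walk_Suc_Some)
    have IH: "walk_value (Suc l) f (f ! (k - 1)) = walk_value l traced1 (contract (f ! (k - 1)))"
      using Suc.IH[OF nK] .
    have step: "walk_value (Suc l) f u = carry u (walk_value (Suc l) f (f ! (k - 1)))"
      using walk_value_Some[OF Some] .
    from Some show ?thesis
    proof (cases rule: next_idx_Suc_Some_cases)
      case 1
      have t0: "target (f ! 0) \<noteq> Some 1"
      proof
        assume "target (f ! 0) = Some 1"
        then have s1: "next_idx (Suc l) (f ! 0) = Some 1" by (simp add: next_idx_Some)
        then show False using nK 1 walk_selfloop[OF s1, of f K] by simp
      qed
      have "contract u = carry u (contract (f ! 0))"
        using trace1_entry_wire1 tk 1 loop_value_exit[OF t0] trace1_entry_exit(1)[of l "f ! 0"] t0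
        by (cases "f ! 0") (auto simp: trace1_entry_def)
      then show ?thesis using step IH 1 by (simp add: walk_value_carry)
    next
      case (2 k')
      have cu: "contract u = unshift 1 u" "next_idx l (contract u) = Some k'"
        using trace1_entry_wire_Suc[of u k' l] tk 2 by auto
      have "walk_value l traced1 (contract u) = carry (contract u) (walk_value l traced1 (traced1 ! (k' - 1)))"
        using walk_value_Some[OF cu(2)] .
      also have "\<dots> = carry u (walk_value l traced1 (contract (f ! k')))"
        using traced1_nth[OF 2(2,3)] cu(1) by (simp add: carry_unshift)
      finally show ?thesis using step IH 2 by simp
    qed
  qed
qed


lemma walk_contract_simulation:
  assumes nf: "\<not> exits (Suc l) f u"
    and no_loop: "\<forall>i<j. \<not> (target (f ! 0) = Some 1 \<and> target (walk (Suc l) f u (orig_pos u i)) = Some 1)"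
  shows "walk l traced1 (contract u) j = contract (walk (Suc l) f u (orig_pos u j)) \<and>
    walk_sum l traced1 (contract u) j = walk_sum (Suc l) f u (orig_pos u j) \<and>
    (\<forall>i<j. next_idx l (walk l traced1 (contract u) i) \<noteq> None)"
  using no_loop
proof (induction j)
  case 0
  then show ?case by (simp add: walk_sum_def)
next
  case (Suc j)
  let ?x = "walk (Suc l) f u" and ?y = "walk l traced1 (contract u)" and ?s = "orig_pos u"
  have IH: "?y j = contract (?x (?s j))" "walk_sum l traced1 (contract u) j = walk_sum (Suc l) f u (?s j)"
    "\<forall>i<j. next_idx l (?y i) \<noteq> None"
    using Suc by auto
  define z where "z = ?x (?s j)"
  obtain k where k: "next_idx (Suc l) z = Some k" using walk_next_of_not_exits[OF nf] z_def by blast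
  have tz: "target z = Some k" using k by (simp add: next_idx_Some)
  have x1: "?x (Suc (?s j)) = f ! (k - 1)" using k z_def by (simp add: walk_step)
  have sum1: "walk_sum (Suc l) f u (Suc (?s j)) = walk_sum (Suc l) f u (?s j) + wt z"
    using z_def by (simp add: walk_sum_Suc)
  from k show ?case
  proof (cases rule: next_idx_Suc_Some_cases)
    case 1
    have t0: "target (f ! 0) \<noteq> Some 1" using Suc.prems z_def tz 1 by auto
    obtain k2 where k2: "next_idx (Suc l) (?x (Suc (?s j))) = Some k2"
      using walk_next_of_not_exits[OF nf] by blast
    then have k2': "next_idx (Suc l) (f ! 0) = Some k2" using x1 1 by simp
    then have tk2: "target (f ! 0) = Some k2" by (simp add: next_idx_Some)
    from k2' obtain k'' where k'': "k2 = Suc k''" "1 \<le> k''" "k'' \<le> l"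
      by (cases rule: next_idx_Suc_Some_cases) (use t0 tk2 in auto)
    have x2: "?x (Suc (Suc (?s j))) = f ! k''" using k2 k'' by (simp add: walk_step)
    have sS: "?s (Suc j) = Suc (Suc (?s j))" using tz 1 z_def by simp
    have cz: "contract z = carry z (unshift 1 (f ! 0))"
      using trace1_entry_wire1 tz 1 loop_value_exit[OF t0] by simp
    have ncz: "next_idx l (contract z) = Some k''" using cz tk2 k'' by (cases "f ! 0") auto
    have yS: "?y (Suc j) = contract (?x (?s (Suc j)))"
      using IH(1) z_def ncz traced1_nth[OF k''(2,3)] x2 sS by (simp add: walk_step)
    have wcz: "wt (contract z) = wt z + wt (f ! 0)" using cz tk2 by (simp add: wt_carry target_unshift)
    have "walk_sum l traced1 (contract u) (Suc j) = walk_sum l traced1 (contract u) j + wt (?y j)"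
      by (simp add: walk_sum_Suc)
    also have "\<dots> = walk_sum (Suc l) f u (?s j) + wt z + wt (f ! 0)" using IH(1,2) z_def wcz by simp
    also have "\<dots> = walk_sum (Suc l) f u (?s (Suc j))" using sS sum1 x1 1 by (simp add: walk_sum_Suc)
    finally show ?thesis using yS IH(3) IH(1) z_def ncz by (auto simp: less_Suc_eq)
  next
    case (2 k')
    have sS: "?s (Suc j) = Suc (?s j)" using tz 2 z_def by simp
    have cz: "contract z = unshift 1 z" "next_idx l (contract z) = Some k'"
      using trace1_entry_wire_Suc[of z k' l] tz 2 by auto
    have yS: "?y (Suc j) = contract (?x (?s (Suc j)))"
      using IH(1) z_def cz traced1_nth[OF 2(2,3)] x1 2 sS by (simp add: walk_step)
    have "walk_sum l traced1 (contract u) (Suc j) = walk_sum l traced1 (contract u) j + wt (?y j)"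
      by (simp add: walk_sum_Suc)
    also have "\<dots> = walk_sum (Suc l) f u (?s (Suc j))" using IH(1,2) z_def cz sS sum1 by simp
    finally show ?thesis using yS IH(3) IH(1) z_def cz by (auto simp: less_Suc_eq)
  qed
qed

lemma walk_value_contract_loop:
  assumes nf: "\<not> exits (Suc l) f u" and loop: "target (f ! 0) = Some 1"
    and hit: "target (walk (Suc l) f u (orig_pos u j)) = Some 1"
  shows "walk_value (Suc l) f u = walk_value l traced1 (contract u)"
proof -
  let ?hit = "\<lambda>j. target (walk (Suc l) f u (orig_pos u j)) = Some 1"
  define j1 where "j1 = (LEAST j. ?hit j)"
  have hit1: "?hit j1" unfolding j1_def using hit by (rule LeastI)
  have before: "\<forall>i<j1. \<not> (target (f ! 0) = Some 1 \<and> ?hit i)"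
    unfolding j1_def using not_less_Least by blast
  define z where "z = walk (Suc l) f u (orig_pos u j1)"
  define b where "b = (0 \<le> wt (f ! 0))"
  have sim: "walk l traced1 (contract u) j1 = contract z"
    "\<forall>i<j1. next_idx l (walk l traced1 (contract u) i) \<noteq> None"
    using walk_contract_simulation[OF nf before] z_def by auto
  have "contract z = verdict b"
    using trace1_entry_wire1 hit1 loop_value_loop[OF loop] b_def z_def by simp
  then have "walk_value l traced1 (contract u) = verdict b"
    using walk_value_chain[of j1 l traced1 "contract u" b] sim by simp
  moreover have "walk_value (Suc l) f u = verdict b"
  proof (rule walk_value_chain[of "orig_pos u j1"])
    show "\<forall>i<orig_pos u j1. next_idx (Suc l) (walk (Suc l) f u i) \<noteq> None"
      using walk_next_of_not_exits[OF nf] by auto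
    have s1: "next_idx (Suc l) (f ! 0) = Some 1" using loop by (simp add: next_idx_Some)
    have "walk_value (Suc l) f (f ! 0) = verdict b" using walk_value_selfloop[OF s1] b_def by simp
    moreover have "next_idx (Suc l) z = Some 1" using hit1 z_def by (simp add: next_idx_Some)
    ultimately show "walk_value (Suc l) f (walk (Suc l) f u (orig_pos u j1)) = verdict b"
      using z_def by (simp add: walk_value_Some)
  qed
  ultimately show ?thesis by simp
qed

lemma walk_value_contract_no_loop:
  assumes nf: "\<not> exits (Suc l) f u"
    and no_loop: "\<forall>j. \<not> (target (f ! 0) = Some 1 \<and> target (walk (Suc l) f u (orig_pos u j)) = Some 1)"
  shows "walk_value (Suc l) f u = walk_value l traced1 (contract u)"
proof -
  have sim: "walk_sum l traced1 (contract u) j = walk_sum (Suc l) f u (orig_pos u j)"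
    "next_idx l (walk l traced1 (contract u) j) \<noteq> None" for j
    using walk_contract_simulation[OF nf, of j] walk_contract_simulation[OF nf, of "Suc j"] no_loop
    by auto
  have nf': "\<not> exits l traced1 (contract u)" unfolding exits_def using sim(2) by simp
  define W where "W = Max ((\<lambda>v. \<bar>wt v\<bar>) ` insert u ((\<lambda>k. f ! (k - 1)) ` {1..Suc l}))"
  have "\<bar>walk_sum (Suc l) f u (Suc N) - walk_sum (Suc l) f u N\<bar> \<le> W" for N
  proof -
    have "walk (Suc l) f u N \<in> insert u ((\<lambda>k. f ! (k - 1)) ` {1..Suc l})" by (rule walk_in_range)
    then have "\<bar>wt (walk (Suc l) f u N)\<bar> \<le> W" unfolding W_def by (intro Max_ge) auto
    then show ?thesis by (simp add: walk_sum_Suc)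
  qed
  then have "bdd_below (range (walk_sum (Suc l) f u \<circ> orig_pos u)) \<longleftrightarrow>
      bdd_below (range (walk_sum (Suc l) f u))"
    by (intro bdd_below_range_comp_iff) auto
  moreover have "walk_sum (Suc l) f u \<circ> orig_pos u = walk_sum l traced1 (contract u)"
    using sim(1) by auto
  ultimately show ?thesis using nf nf' unfolding walk_value_def by simp
qed

lemma walk_value_contract: "walk_value (Suc l) f u = walk_value l traced1 (contract u)"
proof (cases "exits (Suc l) f u")
  case True
  then show ?thesis unfolding exits_def using walk_value_contract_exits by blast
next
  case False
  then show ?thesis
    using walk_value_contract_loop walk_value_contract_no_loop by blast
qed

end

lemma Str_Suc:
  assumes f: "f \<in> Shom (Suc l + m) (Suc l + n)"
  shows "Str (Suc l) f = Str l (Str 1 f)"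
proof (rule Str_eqI[OF f])
  interpret first_wire_contraction l m n f by (rule first_wire_contraction.intro[OF f])
  show "length (Str l (Str 1 f)) = m" using ShomD(1)[OF traced1_hom] by simp
  fix j assume j: "j < m"
  have "traced1 ! (l + j) = contract (f ! (Suc l + j))"
    using Str1_nth[OF f_hom1, of "l + j"] j by simp
  then show "walk_value (Suc l) f (f ! (Suc l + j)) = Str l (Str 1 f) ! j"
    using Str_nth_walk_value[OF traced1_hom j] walk_value_contract by simp
qed


section \<open>Trace axioms for arrows\<close>

lemma Str_zero: assumes f: "f \<in> Shom m n" shows "Str 0 f = f"
proof -
  have f0: "f \<in> Shom (0 + m) (0 + n)" using f by simp
  show ?thesis
  proof (rule Str_eqI[OF f0])
    show "length f = m" using ShomD(1)[OF f] .
    fix j assume "j < m"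
    show "walk_value 0 f (f ! (0 + j)) = f ! j" by (cases "f ! j") (simp_all add: walk_value_exit)
  qed
qed

lemma Str_Shom:
  assumes "f \<in> Shom (l + m) (l + n)"
  shows "Str l f \<in> Shom m n"
  using assms
proof (induction l arbitrary: f)
  case 0 then show ?case using Str_zero[of f m n] by simp
next
  case (Suc l)
  have f1: "f \<in> Shom (1 + (l + m)) (1 + (l + n))" using Suc.prems by simp
  have g: "Str 1 f \<in> Shom (l + m) (l + n)" by (rule Str1_Shom[OF f1])
  have "Str (Suc l) f = Str l (Str 1 f)" by (rule Str_Suc[OF Suc.prems])
  then show ?case using Suc.IH[OF g] by simp
qed

lemma walk_value_same:
  assumes "\<And>u k. u \<in> D \<Longrightarrow> next_idx l u = Some k \<Longrightarrow> f ! (k - 1) \<in> D \<and> f' ! (k - 1) = f ! (k - 1)"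
    and "v \<in> D"
  shows "walk_value l f' v = walk_value l f v"
  using walk_value_corr[of D l "\<lambda>u. u" id l f f' "\<lambda>x. x" v] assms by (simp add: option.map_id)

lemma Str_mono:
  assumes "f \<in> Shom (l + m) (l + n)" "f' \<in> Shom (l + m) (l + n)" "hle f f'"
  shows "hle (Str l f) (Str l f')"
  using assms
proof (induction l arbitrary: f f')
  case 0 then show ?case using Str_zero[of f m n] Str_zero[of f' m n] by simp
next
  case (Suc l)
  have f1: "f \<in> Shom (1 + (l + m)) (1 + (l + n))" "f' \<in> Shom (1 + (l + m)) (1 + (l + n))" using Suc.prems by simp_all
  have "hle (Str 1 f) (Str 1 f')" by (rule Str1_mono[OF f1 Suc.prems(3)])
  then have "hle (Str l (Str 1 f)) (Str l (Str 1 f'))"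
    using Suc.IH Str1_Shom[OF f1(1)] Str1_Shom[OF f1(2)] by blast
  then show ?case using Str_Suc[OF Suc.prems(1)] Str_Suc[OF Suc.prems(2)] by simp
qed

lemma Str_add:
  assumes "f \<in> Shom (l + l' + m) (l + l' + n)"
  shows "Str (l + l') f = Str l' (Str l f)"
  using assms
proof (induction l arbitrary: f)
  case 0
  have "f \<in> Shom (l' + m) (l' + n)" using 0 by simp
  then show ?case using Str_zero by simp
next
  case (Suc l)
  have fa: "f \<in> Shom (Suc (l + l') + m) (Suc (l + l') + n)" using Suc.prems by simp
  have fb: "f \<in> Shom (Suc l + (l' + m)) (Suc l + (l' + n))" using Suc.prems by (simp add: add.assoc)
  have f1: "f \<in> Shom (1 + (l + l' + m)) (1 + (l + l' + n))" using Suc.prems by simp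
  have g: "Str 1 f \<in> Shom (l + l' + m) (l + l' + n)" by (rule Str1_Shom[OF f1])
  have "Str (Suc l + l') f = Str (l + l') (Str 1 f)" using Str_Suc[OF fa] by simp
  also have "\<dots> = Str l' (Str l (Str 1 f))" by (rule Suc.IH[OF g])
  also have "Str l (Str 1 f) = Str (Suc l) f" using Str_Suc[OF fb] by simp
  finally show ?case .
qed

lemma Str_yanking: "Str l (Ssym l l) = Sid l"
proof (rule Str_eqI[OF Ssym_Shom])
  show "length (Sid l) = l" by simp
  fix j assume j: "j < l"
  have e1: "Ssym l l ! (l + j) = TIdx (Suc j)" using j by (simp add: Ssym_nth)
  have e2: "Ssym l l ! j = TIdx (l + Suc j)" using j by (simp add: Ssym_nth)
  have n1: "next_idx l (TIdx (Suc j)) = Some (Suc j)" using j by simp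
  have "walk_value l (Ssym l l) (TIdx (Suc j)) = walk_value l (Ssym l l) (TIdx (l + Suc j))"
    using walk_value_Some[OF n1] e2 by simp
  also have "\<dots> = TIdx (Suc j)" by (simp add: walk_value_exit)
  finally show "walk_value l (Ssym l l) (Ssym l l ! (l + j)) = Sid l ! j" using e1 j by simp
qed

lemma unshift_tshift: "(\<forall>k. target v = Some k \<longrightarrow> 1 \<le> k) \<Longrightarrow> unshift l (tshift (l + n) v) = tshift n v"
  by (cases v) auto

lemma Str_superposing:
  assumes f: "f \<in> Shom (l + m) (l + n)" and g: "g \<in> Shom m' n'"
  shows "Str l (Stens (l + n) f g) = Stens n (Str l f) g"
proof -
  note F = ShomD[OF f] and G = ShomD[OF g]
  have F': "Stens (l + n) f g \<in> Shom (l + (m + m')) (l + (n + n'))"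
    using Stens_Shom[OF f g] by (simp add: add.assoc)
  define D where "D = {u. in_T (l + n) u}"
  have corr: "walk_value l (Stens (l + n) f g) u = walk_value l f u" if "u \<in> D" for u
  proof (rule walk_value_same[OF _ that])
    fix u k assume u: "u \<in> D" "next_idx l u = Some k"
    then have "1 \<le> k" "k \<le> l" by (auto simp: next_idx_Some)
    then show "f ! (k - 1) \<in> D \<and> Stens (l + n) f g ! (k - 1) = f ! (k - 1)"
      using F unfolding D_def by simp
  qed
  show ?thesis
  proof (rule Str_eqI[OF F'])
    show "length (Stens n (Str l f) g) = m + m'" using F G by simp
    fix j assume j: "j < m + m'"
    show "walk_value l (Stens (l + n) f g) (Stens (l + n) f g ! (l + j)) = Stens n (Str l f) g ! j"
    proof (cases "j < m")
      case True
      have "Stens (l + n) f g ! (l + j) = f ! (l + j)" using True F by simp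
      moreover have "f ! (l + j) \<in> D" using F(2) True D_def by simp
      ultimately show ?thesis using corr True Str_nth_walk_value[OF f True] F by simp
    next
      case False
      have e: "Stens (l + n) f g ! (l + j) = tshift (l + n) (g ! (j - m))" using False j F G by simp
      have gi: "in_T n' (g ! (j - m))" using G(2) False j by simp
      then have nx: "next_idx l (tshift (l + n) (g ! (j - m))) = None" by (cases "g ! (j - m)") auto
      have "unshift l (tshift (l + n) (g ! (j - m))) = tshift n (g ! (j - m))"
        using gi by (intro unshift_tshift) (auto simp: in_T_target)
      then show ?thesis using e nx False j F G by (simp add: walk_value_exit)
    qed
  qed
qed

lemma comp_entry_verdict[simp]: "comp_entry (verdict b) h = verdict b" by (simp add: verdict_def)

lemma unshift_tshift0: "in_T n w \<Longrightarrow> unshift l (tshift l w) = w"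
  by (cases w) auto

lemma next_tshift0: "in_T n w \<Longrightarrow> next_idx l (tshift l w) = None"
  by (cases w) auto

lemma comp_entry_fed_back:
  "next_idx l u = Some k \<Longrightarrow> comp_entry u (Stens l (Sid l) h) = u"
  by (cases u) (auto split: if_splits)

lemma comp_entry_exit:
  assumes u: "in_T (l + n) u" and exit: "next_idx l u = None" and h: "h \<in> Shom n n'"
  shows "next_idx l (comp_entry u (Stens l (Sid l) h)) = None"
    "unshift l (comp_entry u (Stens l (Sid l) h)) = comp_entry (unshift l u) h"
proof -
  have entry: "Stens l (Sid l) h ! (t - 1) = tshift l (h ! (t - l - 1))" "in_T n' (h ! (t - l - 1))"
    if "l < t" "t \<le> l + n" for t
    using that ShomD[OF h] by simp_all
  have "next_idx l (comp_entry u (Stens l (Sid l) h)) = None \<and>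
      unshift l (comp_entry u (Stens l (Sid l) h)) = comp_entry (unshift l u) h"
  proof (cases u)
    case (TIdx t)
    then have t: "l < t" "t \<le> l + n" using u exit by (auto split: if_splits)
    then show ?thesis using TIdx entry[OF t] next_tshift0[OF entry(2)[OF t]]
      unshift_tshift0[OF entry(2)[OF t]] by simp
  next
    case (TW r t)
    then have t: "l < t" "t \<le> l + n" using u exit by (auto split: if_splits)
    then show ?thesis using TW entry[OF t] next_tshift0[OF entry(2)[OF t]]
      unshift_tshift0[OF entry(2)[OF t]] by (simp add: unshift_add_wt)
  qed simp_all
  then show "next_idx l (comp_entry u (Stens l (Sid l) h)) = None"
    "unshift l (comp_entry u (Stens l (Sid l) h)) = comp_entry (unshift l u) h" by simp_all
qed

lemma Str_Scomp_right:
  assumes f: "f \<in> Shom (l + m) (l + n)" and h: "h \<in> Shom n n'"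
  shows "Str l (Scomp f (Stens l (Sid l) h)) = Scomp (Str l f) h"
proof -
  note F = ShomD[OF f]
  define Ou where "Ou = Stens l (Sid l) h"
  have Ou: "Ou \<in> Shom (l + n) (l + n')" unfolding Ou_def using Stens_Shom[OF Sid_Shom h] .
  have f': "Scomp f Ou \<in> Shom (l + m) (l + n')" by (rule Scomp_Shom[OF f Ou])
  define D where "D = {u. in_T (l + n) u}"
  have corr: "walk_value l (Scomp f Ou) (comp_entry u Ou) = comp_entry (walk_value l f u) h"
    if "u \<in> D" for u
  proof (rule walk_value_corr[of D l "\<lambda>u. comp_entry u Ou" id l f "Scomp f Ou" "\<lambda>x. comp_entry x h",
        OF _ _ _ _ _ _ that])
    fix u assume u: "u \<in> D"
    show "next_idx l (comp_entry u Ou) = map_option id (next_idx l u)"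
      using comp_entry_fed_back comp_entry_exit(1)[OF _ _ h] u unfolding Ou_def D_def
      by (cases "next_idx l u") auto
  next
    fix u k assume "next_idx l u = Some k"
    then have "1 \<le> k" "k \<le> l" by (auto simp: next_idx_Some)
    then show "f ! (k - 1) \<in> D \<and> Scomp f Ou ! (id k - 1) = comp_entry (f ! (k - 1)) Ou"
      using F unfolding D_def by simp
  next
    fix u assume "next_idx l u \<noteq> None"
    then show "wt (comp_entry u Ou) = wt u" using comp_entry_fed_back unfolding Ou_def by auto
  next
    fix u assume "u \<in> D" "next_idx l u = None"
    then show "unshift l (comp_entry u Ou) = comp_entry (unshift l u) h"
      using comp_entry_exit(2)[OF _ _ h] unfolding Ou_def D_def by blast
  next
    fix u x assume "next_idx l u \<noteq> None"
    then have "comp_entry u Ou = u" using comp_entry_fed_back unfolding Ou_def by auto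
    then show "carry (comp_entry u Ou) (comp_entry x h) = comp_entry (carry u x) h"
      by (cases u) (simp_all add: comp_entry_add_wt)
  qed simp
  show ?thesis
    unfolding Ou_def[symmetric]
  proof (rule Str_eqI[OF f'])
    show "length (Scomp (Str l f) h) = m" using F by simp
    fix j assume j: "j < m"
    have "f ! (l + j) \<in> D" using F(2)[of "l + j"] j unfolding D_def by simp
    then show "walk_value l (Scomp f Ou) (Scomp f Ou ! (l + j)) = Scomp (Str l f) h ! j"
      using corr j F Str_nth_walk_value[OF f j] by simp
  qed
qed

lemma Str_Scomp_left:
  assumes f: "f \<in> Shom (l + m) (l + n)" and g: "g \<in> Shom m' m"
  shows "Str l (Scomp (Stens l (Sid l) g) f) = Scomp g (Str l f)"
proof -
  note F = ShomD[OF f] and G = ShomD[OF g]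
  define In where "In = Stens l (Sid l) g"
  have In: "In \<in> Shom (l + m') (l + m)" unfolding In_def using Stens_Shom[OF Sid_Shom g] .
  have f': "Scomp In f \<in> Shom (l + m') (l + n)" by (rule Scomp_Shom[OF In f])
  have same: "walk_value l (Scomp In f) u = walk_value l f u" for u
  proof (rule walk_value_same[of UNIV])
    fix u k assume "next_idx l u = Some k"
    then have "1 \<le> k" "k \<le> l" by (auto simp: next_idx_Some)
    then show "f ! (k - 1) \<in> UNIV \<and> Scomp In f ! (k - 1) = f ! (k - 1)"
      using ShomD(1)[OF In] unfolding In_def by simp
  qed simp
  show ?thesis
    unfolding In_def[symmetric]
  proof (rule Str_eqI[OF f'])
    show "length (Scomp g (Str l f)) = m'" using G by simp
    fix j assume j: "j < m'"
    have "Scomp In f ! (l + j) = comp_entry (tshift l (g ! j)) f"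
      using j G ShomD(1)[OF In] unfolding In_def by simp
    moreover have "in_T m (g ! j)" using G(2) j .
    ultimately show "walk_value l (Scomp In f) (Scomp In f ! (l + j)) = Scomp g (Str l f) ! j"
      using j G Str_nth_walk_value[OF f, of "_ - 1"] same
      by (cases "g ! j") (auto simp: walk_value_add_wt walk_value_exit)
  qed
qed

section \<open>Sliding\<close>

definition shift_above :: "nat \<Rightarrow> nat \<Rightarrow> tv \<Rightarrow> tv" where
  "shift_above l' l v = (case v of TIdx t \<Rightarrow> TIdx (if t \<le> l' then t else t + l)
                         | TW r t \<Rightarrow> TW r (if t \<le> l' then t else t + l) | x \<Rightarrow> x)"

definition swap_blocks :: "nat \<Rightarrow> nat \<Rightarrow> nat \<Rightarrow> nat" where
  "swap_blocks l' l t = (if 1 \<le> t \<and> t \<le> l' then l + t else if l' < t \<and> t \<le> l' + l then t - l' else t)"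

definition rename_wires :: "(nat \<Rightarrow> nat) \<Rightarrow> tv \<Rightarrow> tv" where
  "rename_wires p v = (case v of TIdx t \<Rightarrow> TIdx (p t) | TW r t \<Rightarrow> TW r (p t) | x \<Rightarrow> x)"

lemma rename_wires_simps[simp]: "rename_wires p (TIdx t) = TIdx (p t)" "rename_wires p (TW r t) = TW r (p t)" "rename_wires p TEx = TEx" "rename_wires p TAll = TAll"
  by (simp_all add: rename_wires_def)

lemma shift_above_simps[simp]: "shift_above l' l (TIdx t) = TIdx (if t \<le> l' then t else t + l)"
  "shift_above l' l (TW r t) = TW r (if t \<le> l' then t else t + l)" "shift_above l' l TEx = TEx" "shift_above l' l TAll = TAll"
  by (simp_all add: shift_above_def)

lemma rename_wires_shift_above: "in_T (l' + n) v \<Longrightarrow> rename_wires (swap_blocks l' l) (shift_above l' l v) = tshift l v"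
  by (cases v) (auto simp: swap_blocks_def)

lemma rename_wires_tshift: "in_T l w \<Longrightarrow> rename_wires (swap_blocks l' l) (tshift l' w) = w"
  by (cases w) (auto simp: swap_blocks_def)

text \<open>Both sides of the sliding equation are partial traces of one system in which f and g are
  connected in a loop. The systems H and H' below present it with the two blocks of fed-back wires
  in opposite orders; by vanishing, sliding reduces to the invariance of the trace under swapping
  these blocks.\<close>

locale sliding =
  fixes l l' m n :: nat and f g :: "tv list"
  assumes f_hom: "f \<in> Shom (l + m) (l' + n)" and g_hom: "g \<in> Shom l' l"
begin

definition H :: "tv list" where
  "H = Scomp (Stens l g f) (Stens (l' + l) (Ssym l l') (Sid n))"

definition H' :: "tv list" where
  "H' = Scomp (Stens (l' + l) (Ssym l l') (Sid m)) (Stens l g f)"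

lemma gf_hom: "Stens l g f \<in> Shom (l' + (l + m)) (l + (l' + n))"
  by (rule Stens_Shom[OF g_hom f_hom])

lemma H_hom: "H \<in> Shom (l' + (l + m)) (l' + (l + n))"
proof -
  have "Stens (l' + l) (Ssym l l') (Sid n) \<in> Shom (l + (l' + n)) (l' + (l + n))"
    using Stens_Shom[OF Ssym_Shom[of l l'] Sid_Shom[of n]] by (simp add: add.assoc)
  then show ?thesis unfolding H_def by (rule Scomp_Shom[OF gf_hom])
qed

lemma swap_in_hom: "Stens (l' + l) (Ssym l l') (Sid m) \<in> Shom (l + (l' + m)) (l' + (l + m))"
  using Stens_Shom[OF Ssym_Shom[of l l'] Sid_Shom[of m]] by (simp add: add.assoc)

lemma H'_hom: "H' \<in> Shom (l + (l' + m)) (l + (l' + n))"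
  unfolding H'_def by (rule Scomp_Shom[OF swap_in_hom gf_hom])

lemma H_nth_low:
  assumes k: "k < l'"
  shows "H ! k = tshift l' (g ! k)"
proof -
  have "H ! k = comp_entry (g ! k) (Stens (l' + l) (Ssym l l') (Sid n))"
    unfolding H_def using k ShomD(1)[OF g_hom] by simp
  also have "\<dots> = tshift l' (g ! k)" using ShomD(2)[OF g_hom k]
    by (cases "g ! k") (auto simp: Ssym_nth)
  finally show ?thesis .
qed

lemma H_nth_high:
  assumes j: "j < l + m"
  shows "H ! (l' + j) = shift_above l' l (f ! j)"
proof -
  have "H ! (l' + j) = comp_entry (tshift l (f ! j)) (Stens (l' + l) (Ssym l l') (Sid n))"
    unfolding H_def using j ShomD(1)[OF g_hom] ShomD(1)[OF f_hom] by simp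
  also have "\<dots> = shift_above l' l (f ! j)" using ShomD(2)[OF f_hom j]
    by (cases "f ! j") (auto simp: Ssym_nth nth_append)
  finally show ?thesis .
qed

lemma H'_nth:
  "i < l \<Longrightarrow> H' ! i = tshift l (f ! i)"
  "k < l' \<Longrightarrow> H' ! (l + k) = g ! k"
  "j < m \<Longrightarrow> H' ! (l + l' + j) = tshift l (f ! (l + j))"
  using ShomD(1)[OF f_hom] ShomD(1)[OF g_hom] ShomD(1)[OF swap_in_hom] unfolding H'_def
  by (auto simp: Ssym_nth add.commute add.left_commute)

lemma walk_value_H_tshift: "in_T l w \<Longrightarrow> walk_value l' H (tshift l' w) = w"
  by (simp add: walk_value_exit next_tshift0 unshift_tshift0)

lemma walk_value_H'_tshift: "in_T (l' + n) w \<Longrightarrow> walk_value l H' (tshift l w) = w"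
  by (simp add: walk_value_exit next_tshift0 unshift_tshift0)

lemma Str_H: "Str l' H = Scomp f (Stens l g (Sid n))"
proof (rule Str_eqI[OF H_hom])
  note F = ShomD[OF f_hom] and G = ShomD[OF g_hom]
  show "length (Scomp f (Stens l g (Sid n))) = l + m" using F by simp
  fix j assume j: "j < l + m"
  have fj: "in_T (l' + n) (f ! j)" using F(2) j .
  have feedback: "walk_value l' H (H ! (t - 1)) = g ! (t - 1)" if "1 \<le> t" "t \<le> l'" for t
    using H_nth_low[of "t - 1"] G(2)[of "t - 1"] that walk_value_H_tshift by simp
  show "walk_value l' H (H ! (l' + j)) = Scomp f (Stens l g (Sid n)) ! j"
    using fj j F G feedback by (cases "f ! j") (auto simp: H_nth_high walk_value_Some walk_value_exit)
qed

lemma Str_H': "Str l H' = Scomp (Stens l g (Sid m)) f"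
proof (rule Str_eqI[OF H'_hom])
  note F = ShomD[OF f_hom] and G = ShomD[OF g_hom]
  show "length (Scomp (Stens l g (Sid m)) f) = l' + m" using G by simp
  fix j assume j: "j < l' + m"
  have feedback: "walk_value l H' (H' ! (t - 1)) = f ! (t - 1)" if "1 \<le> t" "t \<le> l" for t
    using H'_nth(1)[of "t - 1"] F(2)[of "t - 1"] that walk_value_H'_tshift by simp
  show "walk_value l H' (H' ! (l + j)) = Scomp (Stens l g (Sid m)) f ! j"
  proof (cases "j < l'")
    case True
    then show ?thesis using G(2)[OF True] H'_nth(2)[OF True] G(1) feedback
      by (cases "g ! j") (auto simp: walk_value_Some walk_value_exit)
  next
    case False
    then have j': "j - l' < m" using j by simp
    then have "H' ! (l + j) = tshift l (f ! (l + (j - l')))" using H'_nth(3)[OF j'] False by simp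
    then show ?thesis using False j G F(2)[of "l + (j - l')"] j' walk_value_H'_tshift by simp
  qed
qed

lemma walk_value_H'_H:
  "walk_value (l + l') H' (rename_wires (swap_blocks l' l) v) = walk_value (l' + l) H v"
proof (rule walk_value_corr[of UNIV "l + l'" "rename_wires (swap_blocks l' l)" "swap_blocks l' l"
      "l' + l" H H' "\<lambda>x. x" v, simplified])
  fix u
  show "next_idx (l + l') (rename_wires (swap_blocks l' l) u) =
      map_option (swap_blocks l' l) (next_idx (l' + l) u)"
    by (cases u) (auto simp: swap_blocks_def)
next
  fix u k assume "next_idx (l' + l) u = Some k"
  then have k: "1 \<le> k" "k \<le> l' + l" by (auto simp: next_idx_Some)
  show "H' ! (swap_blocks l' l k - Suc 0) = rename_wires (swap_blocks l' l) (H ! (k - Suc 0))"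
  proof (cases "k \<le> l'")
    case True
    then show ?thesis using k H'_nth(2)[of "k - 1"] H_nth_low[of "k - 1"] ShomD(2)[OF g_hom, of "k - 1"]
      by (simp add: swap_blocks_def rename_wires_tshift)
  next
    case False
    then have i: "k - l' - 1 < l" using k by simp
    then have "H ! (k - 1) = shift_above l' l (f ! (k - l' - 1))"
      using H_nth_high[of "k - l' - 1"] False by simp
    then show ?thesis
      using H'_nth(1)[OF i] rename_wires_shift_above[OF ShomD(2)[OF f_hom, of "k - l' - 1"]] i False k
      by (simp add: swap_blocks_def)
  qed
next
  fix u show "wt (rename_wires (swap_blocks l' l) u) = wt u" by (cases u) simp_all
next
  fix u assume "next_idx (l' + l) u = None"
  then show "unshift (l + l') (rename_wires (swap_blocks l' l) u) = unshift (l' + l) u"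
    by (cases u) (auto simp: swap_blocks_def split: if_splits)
next
  fix u x show "carry (rename_wires (swap_blocks l' l) u) x = carry u x" by (cases u) simp_all
qed

lemma Str_H'_H: "Str (l + l') H' = Str (l' + l) H"
proof -
  have H4: "H \<in> Shom (l' + l + m) (l' + l + n)" and H'4: "H' \<in> Shom (l + l' + m) (l + l' + n)"
    using H_hom H'_hom by (simp_all add: add.assoc)
  note F = ShomD[OF f_hom]
  show ?thesis
  proof (rule Str_eqI[OF H'4])
    show "length (Str (l' + l) H) = m" using ShomD(1)[OF H4] by simp
    fix j assume j: "j < m"
    have "H' ! (l + l' + j) = rename_wires (swap_blocks l' l) (H ! (l' + l + j))"
      using H'_nth(3)[OF j] H_nth_high[of "l + j"] j F(2)[of "l + j"]
      by (simp add: add.assoc rename_wires_shift_above)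
    then show "walk_value (l + l') H' (H' ! (l + l' + j)) = Str (l' + l) H ! j"
      using walk_value_H'_H Str_nth_walk_value[OF H4 j] by simp
  qed
qed

end

lemma Str_sliding:
  assumes f: "f \<in> Shom (l + m) (l' + n)" and g: "g \<in> Shom l' l"
  shows "Str l (Scomp f (Stens l g (Sid n))) = Str l' (Scomp (Stens l g (Sid m)) f)"
proof -
  interpret sliding l l' m n f g by (rule sliding.intro[OF f g])
  have H4: "H \<in> Shom (l' + l + m) (l' + l + n)" and H'4: "H' \<in> Shom (l + l' + m) (l + l' + n)"
    using H_hom H'_hom by (simp_all add: add.assoc)
  have "Str l (Scomp f (Stens l g (Sid n))) = Str l (Str l' H)" using Str_H by simp
  also have "\<dots> = Str (l' + l) H" using Str_add[OF H4] by simp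
  also have "\<dots> = Str (l + l') H'" using Str_H'_H by simp
  also have "\<dots> = Str l' (Str l H')" using Str_add[OF H'4] by simp
  also have "\<dots> = Str l' (Scomp (Stens l g (Sid m)) f)" using Str_H' by simp
  finally show ?thesis .
qed


section \<open>Antichains of arrows\<close>

lemma Mhom_iff: "S \<in> Mhom m n \<longleftrightarrow> S \<subseteq> Shom m n \<and> finite S \<and> S \<noteq> {} \<and> antichain_h S"
  by (simp add: Mhom_def)

lemma maxel_Mhom: "finite A \<Longrightarrow> A \<noteq> {} \<Longrightarrow> A \<subseteq> Shom m n \<Longrightarrow> maxel A \<in> Mhom m n"
  unfolding Mhom_iff using maxel_sub maxel_finite maxel_nonempty maxel_antichain by blast

lemma Setcompr2_not_empty: "A \<noteq> {} \<Longrightarrow> B \<noteq> {} \<Longrightarrow> {\<phi> a b | a b. a \<in> A \<and> b \<in> B} \<noteq> {}"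
  by blast

lemma Setcompr2_cong:
  assumes "\<And>a b. a \<in> A \<Longrightarrow> b \<in> B \<Longrightarrow> \<phi> a b = \<psi> a b"
  shows "{\<phi> a b | a b. a \<in> A \<and> b \<in> B} = {\<psi> a b | a b. a \<in> A \<and> b \<in> B}"
  using assms by (metis (lifting))

lemma image_Setcompr2: "\<phi> ` {\<psi> a b | a b. a \<in> A \<and> b \<in> B} = {\<phi> (\<psi> a b) | a b. a \<in> A \<and> b \<in> B}"
  by blast

lemma Setcompr2_image_left: "{\<phi> a b | a b. a \<in> \<psi> ` A \<and> b \<in> B} = {\<phi> (\<psi> a) b | a b. a \<in> A \<and> b \<in> B}"
  by blast

lemma Scomp_Setcompr2_subset: "A \<subseteq> Shom m n \<Longrightarrow> B \<subseteq> Shom n p \<Longrightarrow> {Scomp a b | a b. a \<in> A \<and> b \<in> B} \<subseteq> Shom m p"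
  using Scomp_Shom by blast

lemma Stens_Setcompr2_subset: "A \<subseteq> Shom m n \<Longrightarrow> B \<subseteq> Shom m' n' \<Longrightarrow> {Stens n a b | a b. a \<in> A \<and> b \<in> B} \<subseteq> Shom (m + m') (n + n')"
  using Stens_Shom by blast

lemma Scomp_mono_left: "a \<in> Shom m n \<Longrightarrow> a' \<in> Shom m n \<Longrightarrow> b \<in> Shom n p \<Longrightarrow> hle a a' \<Longrightarrow> hle (Scomp a b) (Scomp a' b)"
  using Scomp_mono[of a a' b b m n] ShomD(1) by simp

lemma Scomp_mono_right: "a \<in> Shom m n \<Longrightarrow> b \<in> Shom n p \<Longrightarrow> b' \<in> Shom n p \<Longrightarrow> hle b b' \<Longrightarrow> hle (Scomp a b) (Scomp a b')"
  using Scomp_mono[of a a b b' m n] ShomD(1) by simp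

lemma maxel_Scomp_left: "finite A \<Longrightarrow> finite B \<Longrightarrow> A \<subseteq> Shom m n \<Longrightarrow> B \<subseteq> Shom n p \<Longrightarrow>
   maxel {Scomp a b | a b. a \<in> maxel A \<and> b \<in> B} = maxel {Scomp a b | a b. a \<in> A \<and> b \<in> B}"
  by (rule maxel_Setcompr2_left) (auto intro: Scomp_mono_left)

lemma maxel_Scomp_right: "finite A \<Longrightarrow> finite B \<Longrightarrow> A \<subseteq> Shom m n \<Longrightarrow> B \<subseteq> Shom n p \<Longrightarrow>
   maxel {Scomp a b | a b. a \<in> A \<and> b \<in> maxel B} = maxel {Scomp a b | a b. a \<in> A \<and> b \<in> B}"
  by (rule maxel_Setcompr2_right) (auto intro: Scomp_mono_right)

lemma maxel_Stens_left: "finite A \<Longrightarrow> finite B \<Longrightarrow>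
   maxel {Stens n a b | a b. a \<in> maxel A \<and> b \<in> B} = maxel {Stens n a b | a b. a \<in> A \<and> b \<in> B}"
  by (rule maxel_Setcompr2_left) (auto intro: Stens_mono)

lemma maxel_Stens_right: "finite A \<Longrightarrow> finite B \<Longrightarrow>
   maxel {Stens n a b | a b. a \<in> A \<and> b \<in> maxel B} = maxel {Stens n a b | a b. a \<in> A \<and> b \<in> B}"
  by (rule maxel_Setcompr2_right) (auto intro: Stens_mono)

lemma Setcompr2_assoc:
  assumes "\<And>a b c. a \<in> A \<Longrightarrow> b \<in> B \<Longrightarrow> c \<in> C \<Longrightarrow> \<phi> (\<psi> a b) c = \<chi> a (\<theta> b c)"
  shows "{\<phi> x c | x c. x \<in> {\<psi> a b | a b. a \<in> A \<and> b \<in> B} \<and> c \<in> C}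
       = {\<chi> a y | a y. a \<in> A \<and> y \<in> {\<theta> b c | b c. b \<in> B \<and> c \<in> C}}"
proof (intro equalityI subsetI)
  fix z assume "z \<in> {\<phi> x c | x c. x \<in> {\<psi> a b | a b. a \<in> A \<and> b \<in> B} \<and> c \<in> C}"
  then obtain a b c where abc: "a \<in> A" "b \<in> B" "c \<in> C" "z = \<phi> (\<psi> a b) c" by blast
  then have "z = \<chi> a (\<theta> b c)" using assms by simp
  then show "z \<in> {\<chi> a y | a y. a \<in> A \<and> y \<in> {\<theta> b c | b c. b \<in> B \<and> c \<in> C}}" using abc by blast
next
  fix z assume "z \<in> {\<chi> a y | a y. a \<in> A \<and> y \<in> {\<theta> b c | b c. b \<in> B \<and> c \<in> C}}"
  then obtain a b c where abc: "a \<in> A" "b \<in> B" "c \<in> C" "z = \<chi> a (\<theta> b c)" by blast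
  then have "z = \<phi> (\<psi> a b) c" using assms by simp
  then show "z \<in> {\<phi> x c | x c. x \<in> {\<psi> a b | a b. a \<in> A \<and> b \<in> B} \<and> c \<in> C}" using abc by blast
qed

lemma Mcomp_closed: "S \<in> Mhom m n \<Longrightarrow> T \<in> Mhom n p \<Longrightarrow> Mcomp S T \<in> Mhom m p"
  unfolding Mcomp_def Mhom_iff
  by (intro maxel_Mhom[unfolded Mhom_iff] finite_Setcompr2 Setcompr2_not_empty Scomp_Setcompr2_subset) auto

lemma Mid_closed: "Mid m \<in> Mhom m m"
  unfolding Mid_def Mhom_iff antichain_h_def using Sid_Shom by auto

lemma Mcomp_Mid_left: "S \<in> Mhom m n \<Longrightarrow> Mcomp (Mid m) S = S"
proof -
  assume S: "S \<in> Mhom m n"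
  have "{Scomp f g | f g. f \<in> Mid m \<and> g \<in> S} = S"
    using S unfolding Mid_def Mhom_iff by (force simp: Scomp_Sid_left dest: ShomD(1))
  then show ?thesis using S unfolding Mcomp_def Mhom_iff by (simp add: maxel_antichain_id)
qed

lemma Mcomp_Mid_right: "S \<in> Mhom m n \<Longrightarrow> Mcomp S (Mid n) = S"
proof -
  assume S: "S \<in> Mhom m n"
  have "{Scomp f g | f g. f \<in> S \<and> g \<in> Mid n} = S"
    using S unfolding Mid_def Mhom_iff by (force simp: Scomp_Sid_right)
  then show ?thesis using S unfolding Mcomp_def Mhom_iff by (simp add: maxel_antichain_id)
qed

lemma Mcomp_assoc:
  assumes S: "S \<in> Mhom m n" and T: "T \<in> Mhom n p" and U: "U \<in> Mhom p q"
  shows "Mcomp (Mcomp S T) U = Mcomp S (Mcomp T U)"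
proof -
  have s: "S \<subseteq> Shom m n" "finite S" and t: "T \<subseteq> Shom n p" "finite T" and u: "U \<subseteq> Shom p q" "finite U"
    using S T U unfolding Mhom_iff by auto
  have "Mcomp (Mcomp S T) U = maxel {Scomp x c | x c. x \<in> {Scomp a b | a b. a \<in> S \<and> b \<in> T} \<and> c \<in> U}"
    unfolding Mcomp_def by (rule maxel_Scomp_left[where m=m and n=p and p=q]) (use s t u in \<open>auto intro: finite_Setcompr2 Scomp_Shom\<close>)
  also have "{Scomp x c | x c. x \<in> {Scomp a b | a b. a \<in> S \<and> b \<in> T} \<and> c \<in> U}
      = {Scomp a y | a y. a \<in> S \<and> y \<in> {Scomp b c | b c. b \<in> T \<and> c \<in> U}}"
    by (rule Setcompr2_assoc) (use Scomp_assoc s t in blast)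
  also have "maxel \<dots> = Mcomp S (Mcomp T U)"
    unfolding Mcomp_def by (rule maxel_Scomp_right[where m=m and n=n and p=q, symmetric]) (use s t u in \<open>auto intro: finite_Setcompr2 Scomp_Shom\<close>)
  finally show ?thesis .
qed

lemma maxel_single[simp]: "maxel {x} = {x}"
  by (rule maxel_antichain_id) (simp add: antichain_h_def)

lemma Setcompr2_interchange:
  assumes "\<And>a b c d. a \<in> A \<Longrightarrow> b \<in> B \<Longrightarrow> c \<in> C \<Longrightarrow> d \<in> D \<Longrightarrow> \<phi> (\<psi> a b) (\<psi>' c d) = \<chi> (\<theta> a c) (\<theta>' b d)"
  shows "{\<phi> x y | x y. x \<in> {\<psi> a b | a b. a \<in> A \<and> b \<in> B} \<and> y \<in> {\<psi>' c d | c d. c \<in> C \<and> d \<in> D}}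
       = {\<chi> x y | x y. x \<in> {\<theta> a c | a c. a \<in> A \<and> c \<in> C} \<and> y \<in> {\<theta>' b d | b d. b \<in> B \<and> d \<in> D}}"
proof (intro equalityI subsetI)
  fix z assume "z \<in> {\<phi> x y | x y. x \<in> {\<psi> a b | a b. a \<in> A \<and> b \<in> B} \<and> y \<in> {\<psi>' c d | c d. c \<in> C \<and> d \<in> D}}"
  then obtain a b c d where abc: "a \<in> A" "b \<in> B" "c \<in> C" "d \<in> D" "z = \<phi> (\<psi> a b) (\<psi>' c d)" by blast
  then have "z = \<chi> (\<theta> a c) (\<theta>' b d)" using assms by simp
  then show "z \<in> {\<chi> x y | x y. x \<in> {\<theta> a c | a c. a \<in> A \<and> c \<in> C} \<and> y \<in> {\<theta>' b d | b d. b \<in> B \<and> d \<in> D}}" using abc by blast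
next
  fix z assume "z \<in> {\<chi> x y | x y. x \<in> {\<theta> a c | a c. a \<in> A \<and> c \<in> C} \<and> y \<in> {\<theta>' b d | b d. b \<in> B \<and> d \<in> D}}"
  then obtain a b c d where abc: "a \<in> A" "b \<in> B" "c \<in> C" "d \<in> D" "z = \<chi> (\<theta> a c) (\<theta>' b d)" by blast
  then have "z = \<phi> (\<psi> a b) (\<psi>' c d)" using assms by simp
  then show "z \<in> {\<phi> x y | x y. x \<in> {\<psi> a b | a b. a \<in> A \<and> b \<in> B} \<and> y \<in> {\<psi>' c d | c d. c \<in> C \<and> d \<in> D}}" using abc by blast
qed

lemma Mtens_closed: "F \<in> Mhom m n \<Longrightarrow> G \<in> Mhom m' n' \<Longrightarrow> Mtens m n m' n' F G \<in> Mhom (m + m') (n + n')"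
  unfolding Mtens_def Mhom_iff
  by (intro maxel_Mhom[unfolded Mhom_iff] finite_Setcompr2 Setcompr2_not_empty Stens_Setcompr2_subset) auto

lemma Mtens_Mid: "Mtens m m m' m' (Mid m) (Mid m') = Mid (m + m')"
proof -
  have "{Stens m f g | f g. f \<in> Mid m \<and> g \<in> Mid m'} = {Sid (m + m')}"
    unfolding Mid_def using Stens_Sid by auto
  then show ?thesis unfolding Mtens_def Mid_def by simp
qed

lemma Mtens_interchange:
  assumes F: "F \<in> Mhom m n" and G: "G \<in> Mhom n p" and F': "F' \<in> Mhom m' n'" and G': "G' \<in> Mhom n' p'"
  shows "Mtens m p m' p' (Mcomp F G) (Mcomp F' G') = Mcomp (Mtens m n m' n' F F') (Mtens n p n' p' G G')"
proof -
  have f: "F \<subseteq> Shom m n" "finite F" and g: "G \<subseteq> Shom n p" "finite G"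
    and f': "F' \<subseteq> Shom m' n'" "finite F'" and g': "G' \<subseteq> Shom n' p'" "finite G'"
    using F G F' G' unfolding Mhom_iff by auto
  define FG where "FG = {Scomp a b | a b. a \<in> F \<and> b \<in> G}"
  define FG' where "FG' = {Scomp a b | a b. a \<in> F' \<and> b \<in> G'}"
  define FF where "FF = {Stens n a b | a b. a \<in> F \<and> b \<in> F'}"
  define GG where "GG = {Stens p a b | a b. a \<in> G \<and> b \<in> G'}"
  have finite_sets: "finite FG" "finite FG'" "finite FF" "finite GG" unfolding FG_def FG'_def FF_def GG_def
    using f g f' g' by (auto intro: finite_Setcompr2)
  have sub: "FF \<subseteq> Shom (m + m') (n + n')" "GG \<subseteq> Shom (n + n') (p + p')"
    unfolding FF_def GG_def using f g f' g' by (auto intro: Stens_Shom)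
  have "Mtens m p m' p' (Mcomp F G) (Mcomp F' G') = maxel {Stens p a b | a b. a \<in> maxel FG \<and> b \<in> maxel FG'}"
    unfolding Mtens_def Mcomp_def FG_def FG'_def ..
  also have "\<dots> = maxel {Stens p a b | a b. a \<in> FG \<and> b \<in> maxel FG'}"
    using finite_sets by (intro maxel_Stens_left) (auto intro: maxel_finite)
  also have "\<dots> = maxel {Stens p a b | a b. a \<in> FG \<and> b \<in> FG'}"
    using finite_sets by (intro maxel_Stens_right) auto
  also have "{Stens p a b | a b. a \<in> FG \<and> b \<in> FG'} = {Scomp a b | a b. a \<in> FF \<and> b \<in> GG}"
    unfolding FG_def FG'_def FF_def GG_def
    by (rule Setcompr2_interchange) (use Stens_interchange f g f' g' in blast)
  also have "maxel \<dots> = maxel {Scomp a b | a b. a \<in> FF \<and> b \<in> maxel GG}"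
    using finite_sets sub maxel_sub by (intro maxel_Scomp_right[symmetric, where m="m + m'" and n="n + n'" and p="p + p'"]) auto
  also have "\<dots> = maxel {Scomp a b | a b. a \<in> maxel FF \<and> b \<in> maxel GG}"
    using finite_sets sub maxel_sub by (intro maxel_Scomp_left[symmetric, where m="m + m'" and n="n + n'" and p="p + p'"]) (auto intro: maxel_finite)
  also have "\<dots> = Mcomp (Mtens m n m' n' F F') (Mtens n p n' p' G G')"
    unfolding Mtens_def Mcomp_def FF_def GG_def ..
  finally show ?thesis .
qed

lemma Mtens_assoc:
  assumes F: "F \<in> Mhom m n" and G: "G \<in> Mhom m' n'" and H: "H \<in> Mhom m'' n''"
  shows "Mtens (m + m') (n + n') m'' n'' (Mtens m n m' n' F G) H = Mtens m n (m' + m'') (n' + n'') F (Mtens m' n' m'' n'' G H)"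
proof -
  have f: "finite F" and g: "finite G" and h: "finite H" using F G H unfolding Mhom_iff by auto
  have "Mtens (m + m') (n + n') m'' n'' (Mtens m n m' n' F G) H
      = maxel {Stens (n + n') x c | x c. x \<in> {Stens n a b | a b. a \<in> F \<and> b \<in> G} \<and> c \<in> H}"
    unfolding Mtens_def using f g h by (intro maxel_Stens_left finite_Setcompr2)
  also have "{Stens (n + n') x c | x c. x \<in> {Stens n a b | a b. a \<in> F \<and> b \<in> G} \<and> c \<in> H}
     = {Stens n a y | a y. a \<in> F \<and> y \<in> {Stens n' b c | b c. b \<in> G \<and> c \<in> H}}"
    by (rule Setcompr2_assoc) (simp add: Stens_assoc)
  also have "maxel \<dots> = Mtens m n (m' + m'') (n' + n'') F (Mtens m' n' m'' n'' G H)"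
    unfolding Mtens_def using f g h by (intro maxel_Stens_right[symmetric] finite_Setcompr2)
  finally show ?thesis .
qed

lemma Mtens_unit: "F \<in> Mhom m n \<Longrightarrow> Mtens 0 0 m n (Mid 0) F = F \<and> Mtens m n 0 0 F (Mid 0) = F"
proof -
  assume F: "F \<in> Mhom m n"
  have s0: "Sid 0 = []" by (simp add: Sid_def)
  have "{Stens 0 a b | a b. a \<in> Mid 0 \<and> b \<in> F} = F" unfolding Mid_def s0 by (auto simp: Stens_unit)
  moreover have "{Stens n a b | a b. a \<in> F \<and> b \<in> Mid 0} = F" unfolding Mid_def s0 by (auto simp: Stens_unit)
  ultimately show ?thesis using F unfolding Mtens_def Mhom_iff by (simp add: maxel_antichain_id)
qed

lemma Msym_closed: "Msym m n \<in> Mhom (m + n) (n + m)"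
  unfolding Msym_def Mhom_iff antichain_h_def using Ssym_Shom by auto

lemma Msym_natural:
  assumes F: "F \<in> Mhom m n" and G: "G \<in> Mhom m' n'"
  shows "Mcomp (Mtens m n m' n' F G) (Msym n n') = Mcomp (Msym m m') (Mtens m' n' m n G F)"
proof -
  have f: "F \<subseteq> Shom m n" "finite F" and g: "G \<subseteq> Shom m' n'" "finite G"
    using F G unfolding Mhom_iff by auto
  define FG where "FG = {Stens n a b | a b. a \<in> F \<and> b \<in> G}"
  define GF where "GF = {Stens n' a b | a b. a \<in> G \<and> b \<in> F}"
  have FG: "FG \<subseteq> Shom (m + m') (n + n')" "finite FG" and GF: "GF \<subseteq> Shom (m' + m) (n' + n)" "finite GF"
    unfolding FG_def GF_def using f g by (auto intro: finite_Setcompr2 Stens_Shom)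
  have "Mcomp (Mtens m n m' n' F G) (Msym n n') = maxel {Scomp a b | a b. a \<in> FG \<and> b \<in> Msym n n'}"
    unfolding Mcomp_def Mtens_def FG_def[symmetric] Msym_def
    using FG Ssym_Shom by (intro maxel_Scomp_left[where m="m + m'" and n="n + n'" and p="n' + n"]) auto
  also have "{Scomp a b | a b. a \<in> FG \<and> b \<in> Msym n n'} = {Scomp a b | a b. a \<in> Msym m m' \<and> b \<in> GF}"
  proof -
    have "{Scomp a b | a b. a \<in> FG \<and> b \<in> Msym n n'} =
        {Scomp (Stens n a b) (Ssym n n') | a b. a \<in> F \<and> b \<in> G}"
      unfolding FG_def Msym_def by blast
    also have "\<dots> = {Scomp (Ssym m m') (Stens n' b a) | a b. a \<in> F \<and> b \<in> G}"
      using f g by (intro Setcompr2_cong) (metis Ssym_natural subsetD)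
    also have "\<dots> = {Scomp a b | a b. a \<in> Msym m m' \<and> b \<in> GF}"
      unfolding GF_def Msym_def by blast
    finally show ?thesis .
  qed
  also have "maxel \<dots> = Mcomp (Msym m m') (Mtens m' n' m n G F)"
    unfolding Mcomp_def Mtens_def GF_def[symmetric] Msym_def
    using GF Ssym_Shom by (intro maxel_Scomp_right[symmetric, where m="m + m'" and n="m' + m" and p="n' + n"]) auto
  finally show ?thesis .
qed

lemma Msym_inverse: "Mcomp (Msym m n) (Msym n m) = Mid (m + n)"
proof -
  have "{Scomp a b | a b. a \<in> Msym m n \<and> b \<in> Msym n m} = {Sid (m + n)}"
    unfolding Msym_def using Ssym_inverse by auto
  then show ?thesis unfolding Mcomp_def Mid_def by simp
qed

lemma Msym_hexagon: "Msym m (n + p) = Mcomp (Mtens (m + n) (n + m) p p (Msym m n) (Mid p)) (Mtens n n (m + p) (p + m) (Mid n) (Msym m p))"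
proof -
  have a: "{Stens (n + m) a b | a b. a \<in> Msym m n \<and> b \<in> Mid p} = {Stens (n + m) (Ssym m n) (Sid p)}"
    unfolding Msym_def Mid_def by auto
  have b: "{Stens n a b | a b. a \<in> Mid n \<and> b \<in> Msym m p} = {Stens n (Sid n) (Ssym m p)}"
    unfolding Msym_def Mid_def by auto
  have c: "{Scomp a b | a b. a \<in> {Stens (n + m) (Ssym m n) (Sid p)} \<and> b \<in> {Stens n (Sid n) (Ssym m p)}}
     = {Ssym m (n + p)}" using Ssym_hexagon by auto
  show ?thesis unfolding Mcomp_def Mtens_def a b maxel_single c by (simp add: Msym_def)
qed

lemma Mtr_closed: "F \<in> Mhom (l + m) (l + n) \<Longrightarrow> Mtr l m n F \<in> Mhom m n"
  unfolding Mtr_def Mhom_iff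
  by (intro maxel_Mhom[unfolded Mhom_iff]) (auto intro: Str_Shom)

lemma maxel_Str_maxel: "F \<subseteq> Shom (l + m) (l + n) \<Longrightarrow> finite F \<Longrightarrow> maxel (Str l ` maxel F) = maxel (Str l ` F)"
  by (rule maxel_image_maxel) (auto intro: Str_mono)

lemma Mtr_zero: "F \<in> Mhom m n \<Longrightarrow> Mtr 0 m n F = F"
proof -
  assume F: "F \<in> Mhom m n"
  then have "Str 0 ` F = F" unfolding Mhom_iff using Str_zero by force
  then show ?thesis using F unfolding Mtr_def Mhom_iff by (simp add: maxel_antichain_id)
qed

lemma Mtr_add:
  assumes F: "F \<in> Mhom (l + l' + m) (l + l' + n)"
  shows "Mtr (l + l') m n F = Mtr l' m n (Mtr l (l' + m) (l' + n) F)"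
proof -
  have f: "F \<subseteq> Shom (l + l' + m) (l + l' + n)" "finite F" using F unfolding Mhom_iff by auto
  have f': "F \<subseteq> Shom (l + (l' + m)) (l + (l' + n))" using f by (simp add: add.assoc)
  have sub: "Str l ` F \<subseteq> Shom (l' + m) (l' + n)" using f' Str_Shom by blast
  have "Mtr l' m n (Mtr l (l' + m) (l' + n) F) = maxel (Str l' ` Str l ` F)"
    unfolding Mtr_def using sub f by (intro maxel_Str_maxel) auto
  also have "Str l' ` Str l ` F = Str (l + l') ` F"
    using f Str_add by (force simp: image_image)
  finally show ?thesis unfolding Mtr_def by simp
qed

lemma Mtr_superposing:
  assumes F: "F \<in> Mhom (l + m) (l + n)" and G: "G \<in> Mhom m' n'"
  shows "Mtr l (m + m') (n + n') (Mtens (l + m) (l + n) m' n' F G) = Mtens m n m' n' (Mtr l m n F) G"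
proof -
  have f: "F \<subseteq> Shom (l + m) (l + n)" "finite F" and g: "G \<subseteq> Shom m' n'" "finite G"
    using F G unfolding Mhom_iff by auto
  define R where "R = {Stens (l + n) a b | a b. a \<in> F \<and> b \<in> G}"
  have R: "R \<subseteq> Shom (l + (m + m')) (l + (n + n'))" "finite R"
    unfolding R_def using f g Stens_Shom[of _ "l + m" "l + n" _ m' n'] by (auto simp: add.assoc intro: finite_Setcompr2)
  have "Mtr l (m + m') (n + n') (Mtens (l + m) (l + n) m' n' F G) = maxel (Str l ` R)"
    unfolding Mtr_def Mtens_def R_def[symmetric] using R by (rule maxel_Str_maxel)
  also have "Str l ` R = {Stens n a b | a b. a \<in> Str l ` F \<and> b \<in> G}"
    unfolding R_def image_Setcompr2 Setcompr2_image_left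
    using f g by (intro Setcompr2_cong) (auto intro: Str_superposing)
  also have "maxel \<dots> = Mtens m n m' n' (Mtr l m n F) G"
    unfolding Mtens_def Mtr_def using f g by (intro maxel_Stens_left[symmetric]) auto
  finally show ?thesis .
qed

lemma Mtr_yanking: "Mtr l l l (Msym l l) = Mid l"
  unfolding Mtr_def Msym_def Mid_def by (simp add: Str_yanking)

lemma Mtr_sliding:
  assumes F: "F \<in> Mhom (l + m) (l' + n)" and G: "G \<in> Mhom l' l"
  shows "Mtr l m n (Mcomp F (Mtens l' l n n G (Mid n))) = Mtr l' m n (Mcomp (Mtens l' l m m G (Mid m)) F)"
proof -
  have f: "F \<subseteq> Shom (l + m) (l' + n)" "finite F" and g: "G \<subseteq> Shom l' l" "finite G"
    using F G unfolding Mhom_iff by auto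
  define RA where "RA = {Stens l a b | a b. a \<in> G \<and> b \<in> Mid n}"
  define RB where "RB = {Stens l a b | a b. a \<in> G \<and> b \<in> Mid m}"
  have RA: "RA \<subseteq> Shom (l' + n) (l + n)" "finite RA" and RB: "RB \<subseteq> Shom (l' + m) (l + m)" "finite RB"
    unfolding RA_def RB_def Mid_def using g Sid_Shom Stens_Shom by (auto intro: finite_Setcompr2)
  define L where "L = {Scomp a b | a b. a \<in> F \<and> b \<in> RA}"
  define R where "R = {Scomp a b | a b. a \<in> RB \<and> b \<in> F}"
  have L: "L \<subseteq> Shom (l + m) (l + n)" "finite L" and R: "R \<subseteq> Shom (l' + m) (l' + n)" "finite R"
    unfolding L_def R_def using f RA RB Scomp_Shom by (blast intro: finite_Setcompr2)+
  have "Mcomp F (Mtens l' l n n G (Mid n)) = maxel L"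
    unfolding Mcomp_def Mtens_def RA_def[symmetric] L_def
    using f RA by (intro maxel_Scomp_right[where n="l' + n"]) auto
  then have "Mtr l m n (Mcomp F (Mtens l' l n n G (Mid n))) = maxel (Str l ` L)"
    unfolding Mtr_def using L by (simp add: maxel_Str_maxel)
  also have "Str l ` L = Str l' ` R"
  proof -
    have "Str l ` L = {Str l (Scomp a (Stens l b (Sid n))) | a b. a \<in> F \<and> b \<in> G}"
      unfolding L_def RA_def Mid_def by blast
    also have "\<dots> = {Str l' (Scomp (Stens l b (Sid m)) a) | a b. a \<in> F \<and> b \<in> G}"
      using f g by (intro Setcompr2_cong) (auto intro: Str_sliding)
    also have "\<dots> = Str l' ` R"
      unfolding R_def RB_def Mid_def by blast
    finally show ?thesis .
  qed
  also have "Mcomp (Mtens l' l m m G (Mid m)) F = maxel R"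
    unfolding Mcomp_def Mtens_def RB_def[symmetric] R_def
    using f RB by (intro maxel_Scomp_left[where n="l + m"]) auto
  then have "maxel (Str l' ` R) = Mtr l' m n (Mcomp (Mtens l' l m m G (Mid m)) F)"
    unfolding Mtr_def using R by (simp add: maxel_Str_maxel)
  finally show ?thesis .
qed

lemma Mtr_Mcomp_right:
  assumes F: "F \<in> Mhom (l + m) (l + n)" and H: "H \<in> Mhom n n'"
  shows "Mtr l m n' (Mcomp F (Mtens l l n n' (Mid l) H)) = Mcomp (Mtr l m n F) H"
proof -
  have f: "F \<subseteq> Shom (l + m) (l + n)" "finite F" and h: "H \<subseteq> Shom n n'" "finite H"
    using F H unfolding Mhom_iff by auto
  define RO where "RO = {Stens l a b | a b. a \<in> Mid l \<and> b \<in> H}"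
  have RO: "RO \<subseteq> Shom (l + n) (l + n')" "finite RO"
    unfolding RO_def Mid_def using h Sid_Shom Stens_Shom by (auto intro: finite_Setcompr2)
  define R where "R = {Scomp a b | a b. a \<in> F \<and> b \<in> RO}"
  have R: "R \<subseteq> Shom (l + m) (l + n')" "finite R"
    unfolding R_def using f RO Scomp_Shom by (blast intro: finite_Setcompr2)+
  have "Mcomp F (Mtens l l n n' (Mid l) H) = maxel R"
    unfolding Mcomp_def Mtens_def RO_def[symmetric] R_def
    using f RO by (intro maxel_Scomp_right[where n="l + n"]) auto
  then have "Mtr l m n' (Mcomp F (Mtens l l n n' (Mid l) H)) = maxel (Str l ` R)"
    unfolding Mtr_def using R by (simp add: maxel_Str_maxel)
  also have "Str l ` R = {Scomp a b | a b. a \<in> Str l ` F \<and> b \<in> H}"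
  proof -
    have "Str l ` R = {Str l (Scomp a (Stens l (Sid l) b)) | a b. a \<in> F \<and> b \<in> H}"
      unfolding R_def RO_def Mid_def by blast
    also have "\<dots> = {Scomp (Str l a) b | a b. a \<in> F \<and> b \<in> H}"
      using f h by (intro Setcompr2_cong) (auto intro: Str_Scomp_right)
    finally show ?thesis unfolding Setcompr2_image_left .
  qed
  also have "maxel \<dots> = Mcomp (Mtr l m n F) H"
    unfolding Mcomp_def Mtr_def using f h Str_Shom
    by (intro maxel_Scomp_left[symmetric, where m=m and n=n and p=n']) auto
  finally show ?thesis .
qed

lemma Mtr_Mcomp_left:
  assumes F: "F \<in> Mhom (l + m) (l + n)" and G: "G \<in> Mhom m' m"
  shows "Mtr l m' n (Mcomp (Mtens l l m' m (Mid l) G) F) = Mcomp G (Mtr l m n F)"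
proof -
  have f: "F \<subseteq> Shom (l + m) (l + n)" "finite F" and g: "G \<subseteq> Shom m' m" "finite G"
    using F G unfolding Mhom_iff by auto
  define RI where "RI = {Stens l a b | a b. a \<in> Mid l \<and> b \<in> G}"
  have RI: "RI \<subseteq> Shom (l + m') (l + m)" "finite RI"
    unfolding RI_def Mid_def using g Sid_Shom Stens_Shom by (auto intro: finite_Setcompr2)
  define R where "R = {Scomp a b | a b. a \<in> RI \<and> b \<in> F}"
  have R: "R \<subseteq> Shom (l + m') (l + n)" "finite R"
    unfolding R_def using f RI Scomp_Shom by (blast intro: finite_Setcompr2)+
  have "Mcomp (Mtens l l m' m (Mid l) G) F = maxel R"
    unfolding Mcomp_def Mtens_def RI_def[symmetric] R_def
    using f RI by (intro maxel_Scomp_left[where n="l + m"]) auto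
  then have "Mtr l m' n (Mcomp (Mtens l l m' m (Mid l) G) F) = maxel (Str l ` R)"
    unfolding Mtr_def using R by (simp add: maxel_Str_maxel)
  also have "Str l ` R = {Scomp a b | a b. a \<in> G \<and> b \<in> Str l ` F}"
  proof -
    have "Str l ` R = {Str l (Scomp (Stens l (Sid l) b) a) | a b. a \<in> F \<and> b \<in> G}"
      unfolding R_def RI_def Mid_def by blast
    also have "\<dots> = {Scomp b (Str l a) | a b. a \<in> F \<and> b \<in> G}"
      using f g by (intro Setcompr2_cong) (auto intro: Str_Scomp_left)
    finally show ?thesis by blast
  qed
  also have "maxel \<dots> = Mcomp G (Mtr l m n F)"
    unfolding Mcomp_def Mtr_def using f g Str_Shom
    by (intro maxel_Scomp_right[symmetric, where m=m' and n=m and p=n]) auto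
  finally show ?thesis .
qed

lemma Mtr_tightening:
  assumes F: "F \<in> Mhom (l + m) (l + n)" and G: "G \<in> Mhom m' m" and H: "H \<in> Mhom n n'"
  shows "Mtr l m' n' (Mcomp (Mcomp (Mtens l l m' m (Mid l) G) F) (Mtens l l n n' (Mid l) H)) =
    Mcomp (Mcomp G (Mtr l m n F)) H"
proof -
  have "Mcomp (Mtens l l m' m (Mid l) G) F \<in> Mhom (l + m') (l + n)"
    using Mcomp_closed[OF Mtens_closed[OF Mid_closed G] F] .
  then show ?thesis using Mtr_Mcomp_right[OF _ H] Mtr_Mcomp_left[OF F G] by simp
qed

theorem propositionD15:
  shows "traced_smc Mhom Mcomp Mid Mtens Msym Mtr"
  unfolding traced_smc_def
  by (intro conjI allI impI)
    (simp_all add: Mcomp_closed Mid_closed Mcomp_Mid_left Mcomp_Mid_right Mcomp_assoc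
      Mtens_closed Mtens_Mid Mtens_interchange Mtens_assoc Mtens_unit
      Msym_closed Msym_natural Msym_inverse Msym_hexagon
      Mtr_closed Mtr_tightening Mtr_sliding Mtr_zero Mtr_add Mtr_superposing Mtr_yanking)

end
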